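(* Let $H=(V,F)$ be a finite hypergraph with directed edge set $\vec{E}$, let $(r_e)_{e\in\vec E}$ be positive integers, and let $\boldsymbol{u}=\{u_{e'\rightharpoonup e}\}$ be matrix weights with $u_{e'\rightharpoonup e}\in\mathbb{C}^{r_e\times r_{e'}}$ for every pair $e'\rightharpoonup e$. Let $\mathcal{M}(\boldsymbol{u})$ be the linear operator on $\bigoplus_{e\in\vec E}\mathbb{C}^{r_e}$ given by $$(\mathcal{M}(\boldsymbol{u})f)(e)=\sum_{e':\,e'\rightharpoonup e}u_{e'\rightharpoonup e}f(e').$$ Then $$\zeta_H(\boldsymbol{u})^{-1}=\det\big(I-\mathcal{M}(\boldsymbol{u})\big),$$ where the identity is understood as an identity of formal power series in the entries of the matrices $u_{e'\rightharpoonup e}$.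
   Context: A finite hypergraph $H=(V,F)$ consists of a finite set $V$ and a finite set $F$ of nonempty subsets of $V$. Its directed edge set is $\vec E=\{(\alpha\to i):\alpha\in F,\ i\in\alpha\}$; for $e=(\alpha\to i)$ put $s(e)=\alpha$, $t(e)=i$. For $e,e'\in\vec E$ write $e'\rightharpoonup e$ if $t(e')\in s(e)$, $t(e')\neq t(e)$ and $s(e')\neq s(e)$. A closed geodesic is a sequence $(e_1,\dots,e_k)$, $k\ge1$, of directed edges with $e_l\rightharpoonup e_{l+1}$ for all $l\in\mathbb{Z}/k\mathbb{Z}$; it is prime if it is not the $m$-fold repetition of a shorter closed geodesic for some $m\ge2$; a prime cycle is an equivalence class of prime closed geodesics under cyclic permutation, and $\mathfrak{P}_H$ denotes the set of prime cycles. For $\mathfrak p=(e_1,\dots,e_k)$ set $\pi(\mathfrak p)=u_{e_k\rightharpoonup e_1}\cdots u_{e_2\rightharpoonup e_3}u_{e_1\rightharpoonup e_2}\in\mathbb{C}^{r_{e_1}\times r_{e_1}}$. The graph zeta function is $\zeta_H(\boldsymbol u)=\prod_{\mathfrak p\in\mathfrak P_H}\det(I-\pi(\mathfrak p))^{-1}$ (the determinant is independent of the representative of $\mathfrak p$). *)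

theory Defs
  imports "Jordan_Normal_Form.Determinant" "HOL-Computational_Algebra.Formal_Power_Series"
begin

type_synonym 'v dedge = "'v set \<times> 'v"

text \<open>Directed edges (alpha -> i) are pairs (alpha, i); s = fst, t = snd.\<close>
definition dedges :: "'v set set \<Rightarrow> 'v dedge set" where
  "dedges F = {(\<alpha>, i). \<alpha> \<in> F \<and> i \<in> \<alpha>}"

definition feeds :: "'v dedge \<Rightarrow> 'v dedge \<Rightarrow> bool" where
  "feeds e' e \<longleftrightarrow> snd e' \<in> fst e \<and> snd e' \<noteq> snd e \<and> fst e' \<noteq> fst e"

definition closed_geodesic :: "'v set set \<Rightarrow> 'v dedge list \<Rightarrow> bool" where
  "closed_geodesic F c \<longleftrightarrow> c \<noteq> [] \<and> set c \<subseteq> dedges F \<and>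
     (\<forall>l < length c. feeds (c ! l) (c ! (Suc l mod length c)))"

definition prime_geodesic :: "'v set set \<Rightarrow> 'v dedge list \<Rightarrow> bool" where
  "prime_geodesic F c \<longleftrightarrow> closed_geodesic F c \<and>
     \<not> (\<exists>d m. m \<ge> 2 \<and> c = concat (replicate m d))"

definition cyc_class :: "'a list \<Rightarrow> 'a list set" where
  "cyc_class c = (\<lambda>n. rotate n c) ` {..<length c}"

definition prime_cycles :: "'v set set \<Rightarrow> 'v dedge list set set" where
  "prime_cycles F = cyc_class ` {c. prime_geodesic F c}"

definition cyc_len :: "'a list set \<Rightarrow> nat" where
  "cyc_len P = length (SOME c. c \<in> P)"

text \<open>pi_aux ... l = u_{e_l -> e_{l+1}} ... u_{e_1 -> e_2} (0-based indices, cyclic).\<close>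
primrec pi_aux :: "('v dedge \<Rightarrow> nat) \<Rightarrow> ('v dedge \<Rightarrow> 'v dedge \<Rightarrow> complex mat)
    \<Rightarrow> 'v dedge list \<Rightarrow> nat \<Rightarrow> complex mat" where
  "pi_aux r u c 0 = 1\<^sub>m (r (hd c))"
| "pi_aux r u c (Suc l) = u (c ! l) (c ! (Suc l mod length c)) * pi_aux r u c l"

definition pi_mat :: "('v dedge \<Rightarrow> nat) \<Rightarrow> ('v dedge \<Rightarrow> 'v dedge \<Rightarrow> complex mat)
    \<Rightarrow> 'v dedge list \<Rightarrow> complex mat" where
  "pi_mat r u c = pi_aux r u c (length c)"

text \<open>det(I - t^k pi(p)) as a formal power series in the scaling variable t.\<close>
definition cycle_factor :: "('v dedge \<Rightarrow> nat) \<Rightarrow> ('v dedge \<Rightarrow> 'v dedge \<Rightarrow> complex mat)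
    \<Rightarrow> 'v dedge list set \<Rightarrow> complex fps" where
  "cycle_factor r u P = (let c = (SOME c. c \<in> P); A = pi_mat r u c in
     det (1\<^sub>m (dim_row A) - map_mat (\<lambda>x. fps_X ^ length c * fps_const x) A))"

text \<open>Zeta function (with weights t*u) as an infinite product of formal power series:
  the n-th coefficient is that of the finite product over prime cycles of length <= n.\<close>
definition zeta_fps :: "'v set set \<Rightarrow> ('v dedge \<Rightarrow> nat) \<Rightarrow> ('v dedge \<Rightarrow> 'v dedge \<Rightarrow> complex mat)
    \<Rightarrow> complex fps" where
  "zeta_fps F r u = Abs_fps (\<lambda>n. fps_nth
     (\<Prod>P \<in> {P \<in> prime_cycles F. cyc_len P \<le> n}. inverse (cycle_factor r u P)) n)"

text \<open>Basis of the direct sum: pairs (e, j), j < r e, with edges ordered by the list es.\<close>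
definition block_index :: "('v dedge \<Rightarrow> nat) \<Rightarrow> 'v dedge list \<Rightarrow> ('v dedge \<times> nat) list" where
  "block_index r es = concat (map (\<lambda>e. map (\<lambda>j. (e, j)) [0..<r e]) es)"

definition M_mat :: "('v dedge \<Rightarrow> nat) \<Rightarrow> ('v dedge \<Rightarrow> 'v dedge \<Rightarrow> complex mat)
    \<Rightarrow> 'v dedge list \<Rightarrow> complex mat" where
  "M_mat r u es = (let ix = block_index r es; N = length ix in
     mat N N (\<lambda>(a, b). if feeds (fst (ix ! b)) (fst (ix ! a))
        then u (fst (ix ! b)) (fst (ix ! a)) $$ (snd (ix ! a), snd (ix ! b)) else 0))"

end

theory Submission
  imports Defs "Jordan_Normal_Form.Schur_Decomposition"
begin

text \<open>
  Scale every weight by a formal variable \<open>X\<close>. Over \<open>\<complex>\<close>, both \<open>det (I - X M)\<close> and each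
  factor \<open>det (I - X\<^sup>|\<^sup>P\<^sup>| \<pi>(P))\<close> split into factors \<open>1 - c X\<^sup>k\<close> indexed by eigenvalues, and
  by Newton's identities such a product is determined, up to degree \<open>n\<close>, by its power sums
  \<open>\<Sum> k c\<^sup>m\<^sup>/\<^sup>k\<close> for \<open>m \<le> n\<close>. For the determinant the \<open>m\<close>-th power sum is \<open>tr M\<^sup>m\<close>, which expands
  along walks into the sum of \<open>tr \<pi>(c)\<close> over closed geodesics \<open>c\<close> of length \<open>m\<close>. Every closed
  geodesic is uniquely a power \<open>d\<^sup>q\<close> of a prime geodesic, \<open>\<pi>(d\<^sup>q) = \<pi>(d)\<^sup>q\<close>, and \<open>tr \<pi>(d)\<^sup>q\<close>
  does not change under rotation of \<open>d\<close>; grouping by prime cycles gives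
  \<open>\<Sum>\<^bsub>|P| dvd m\<^esub> |P| tr \<pi>(P)\<^sup>m\<^sup>/\<^sup>|\<^sup>P\<^sup>|\<close>, the \<open>m\<close>-th power sum of the product of the factors of all
  prime cycles of length at most \<open>n\<close>.
\<close>

section \<open>Products of factors \<open>1 - c X\<^sup>k\<close> and their power sums\<close>

definition factor_prod :: "(complex \<times> nat) list \<Rightarrow> complex fps" where
  "factor_prod L = (\<Prod>(c, k)\<leftarrow>L. 1 - fps_const c * fps_X ^ k)"

definition power_sum :: "(complex \<times> nat) list \<Rightarrow> nat \<Rightarrow> complex" where
  "power_sum L m = (\<Sum>(c, k)\<leftarrow>L. if k dvd m then of_nat k * c ^ (m div k) else 0)"

definition power_sum_fps :: "(complex \<times> nat) list \<Rightarrow> complex fps" where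
  "power_sum_fps L = Abs_fps (\<lambda>i. power_sum L (Suc i))"

lemma factor_prod_Cons: "factor_prod ((c, k) # L) = (1 - fps_const c * fps_X ^ k) * factor_prod L"
  by (simp add: factor_prod_def)

lemma factor_prod_append: "factor_prod (L @ L') = factor_prod L * factor_prod L'"
  by (simp add: factor_prod_def)

lemma factor_prod_concat: "factor_prod (concat Ls) = (\<Prod>L\<leftarrow>Ls. factor_prod L)"
  by (induction Ls) (simp_all add: factor_prod_append, simp add: factor_prod_def)

lemma power_sum_append: "power_sum (L @ L') m = power_sum L m + power_sum L' m"
  by (simp add: power_sum_def)

lemma power_sum_concat: "power_sum (concat Ls) m = (\<Sum>L\<leftarrow>Ls. power_sum L m)"
  by (induction Ls) (simp_all add: power_sum_append, simp add: power_sum_def)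

lemma factor_prod_const_length:
  "factor_prod (map (\<lambda>l. (l, k)) ls) = (\<Prod>l\<leftarrow>ls. 1 - fps_X ^ k * fps_const l)"
  unfolding factor_prod_def by (simp add: o_def mult.commute)

lemma power_sum_const_length:
  "power_sum (map (\<lambda>l. (l, k)) ls) m =
     (if k dvd m then of_nat k * (\<Sum>l\<leftarrow>ls. l ^ (m div k)) else 0)"
  by (induction ls) (auto simp: power_sum_def algebra_simps)

lemma power_sum_single_add:
  assumes "k > 0"
  shows "power_sum [(c, k)] (m + k) = c * power_sum [(c, k)] m"
  using assms by (auto simp: power_sum_def div_add_self2)

lemma fps_deriv_single_factor:
  assumes k: "k > 0"
  shows "fps_deriv (1 - fps_const c * fps_X ^ k) =
    - ((1 - fps_const c * fps_X ^ k) * power_sum_fps [(c, k)])"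
proof (rule fps_ext)
  fix i
  let ?p = "power_sum [(c, k)]"
  have "(1 - fps_const c * fps_X ^ k) * power_sum_fps [(c, k)] =
      power_sum_fps [(c, k)] - fps_const c * (fps_X ^ k * power_sum_fps [(c, k)])"
    by (simp add: algebra_simps)
  then have rhs: "fps_nth ((1 - fps_const c * fps_X ^ k) * power_sum_fps [(c, k)]) i =
      ?p (Suc i) - c * (if i < k then 0 else ?p (Suc i - k))"
    by (simp add: fps_X_power_mult_nth power_sum_fps_def Suc_diff_le)
  show "fps_nth (fps_deriv (1 - fps_const c * fps_X ^ k)) i =
      fps_nth (- ((1 - fps_const c * fps_X ^ k) * power_sum_fps [(c, k)])) i"
  proof (cases "i < k")
    case True
    then have "k dvd Suc i \<longleftrightarrow> Suc i = k"
      by (auto dest: dvd_imp_le)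
    then show ?thesis
      using True rhs by (auto simp: fps_deriv_nth fps_X_power_nth power_sum_def)
  next
    case False
    then have "?p (Suc i) = c * ?p (Suc i - k)"
      using power_sum_single_add[OF k, of c "Suc i - k"] by simp
    then show ?thesis
      using False rhs by (simp add: fps_deriv_nth fps_X_power_nth)
  qed
qed

lemma fps_deriv_factor_prod:
  assumes "\<forall>(c, k) \<in> set L. k > 0"
  shows "fps_deriv (factor_prod L) = - (factor_prod L * power_sum_fps L)"
  using assms
proof (induction L)
  case Nil
  then show ?case by (simp add: factor_prod_def power_sum_fps_def power_sum_def fps_ext)
next
  case (Cons a L)
  obtain c k where a: "a = (c, k)" by fastforce
  have k: "k > 0" using Cons.prems a by auto
  have IH: "fps_deriv (factor_prod L) = - (factor_prod L * power_sum_fps L)"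
    using Cons by auto
  have S: "power_sum_fps (a # L) = power_sum_fps [(c, k)] + power_sum_fps L"
    by (rule fps_ext) (simp add: power_sum_fps_def power_sum_def a)
  show ?case
    unfolding a factor_prod_Cons fps_deriv_mult IH fps_deriv_single_factor[OF k] S[unfolded a]
    by (simp add: algebra_simps)
qed

lemma factor_prod_nth_0:
  "\<forall>(c, k) \<in> set L. k > 0 \<Longrightarrow> fps_nth (factor_prod L) 0 = 1"
  by (induction L) (auto simp: factor_prod_def)

text \<open>Newton's identities: the logarithmic derivative turns the power sums into a recursion
  for the coefficients of the product.\<close>
lemma factor_prod_nth_eqI:
  assumes pos: "\<forall>(c, k) \<in> set L. k > 0" "\<forall>(c, k) \<in> set L'. k > 0"
    and power_sums: "\<And>m. 1 \<le> m \<Longrightarrow> m \<le> n \<Longrightarrow> power_sum L m = power_sum L' m"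
    and "i \<le> n"
  shows "fps_nth (factor_prod L) i = fps_nth (factor_prod L') i"
  using \<open>i \<le> n\<close>
proof (induction i rule: less_induct)
  case (less i)
  show ?case
  proof (cases i)
    case 0
    then show ?thesis using factor_prod_nth_0 pos by simp
  next
    case (Suc j)
    have "fps_nth (factor_prod L * power_sum_fps L) j = fps_nth (factor_prod L' * power_sum_fps L') j"
      unfolding fps_mult_nth using less Suc power_sums
      by (intro sum.cong refl) (auto simp: power_sum_fps_def)
    then have "fps_nth (fps_deriv (factor_prod L)) j = fps_nth (fps_deriv (factor_prod L')) j"
      by (simp add: fps_deriv_factor_prod pos)
    then show ?thesis
      using Suc by (simp add: fps_deriv_nth del: of_nat_Suc)
  qed
qed

lemma fps_nth_inverse_eqI:
  fixes f g :: "'a::field fps"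
  assumes "fps_nth f 0 \<noteq> 0" "fps_nth g 0 \<noteq> 0" "\<forall>i\<le>n. fps_nth f i = fps_nth g i"
  shows "fps_nth (inverse f) n = fps_nth (inverse g) n"
proof -
  have "inverse f * inverse g * (g - f) = inverse f * (inverse g * g) - inverse g * (inverse f * f)"
    by (simp add: algebra_simps)
  then have "inverse f - inverse g = inverse f * inverse g * (g - f)"
    using assms(1,2) by (simp add: inverse_mult_eq_1)
  moreover have "fps_nth (inverse f * inverse g * (g - f)) n = 0"
    unfolding fps_mult_nth using assms(3) by (intro sum.neutral) auto
  ultimately show ?thesis by (metis eq_iff_diff_eq_0 fps_sub_nth)
qed

section \<open>Traces and eigenvalues of complex matrices\<close>

definition mat_trace :: "'a::comm_ring_1 mat \<Rightarrow> 'a" where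
  "mat_trace A = (\<Sum>i<dim_row A. A $$ (i, i))"

lemma mat_trace_mult_comm:
  assumes A: "A \<in> carrier_mat n m" and B: "B \<in> carrier_mat m n"
  shows "mat_trace (A * B) = mat_trace (B * A)"
proof -
  have "mat_trace (A * B) = (\<Sum>i<n. \<Sum>k<m. A $$ (i, k) * B $$ (k, i))"
    using A B by (simp add: mat_trace_def scalar_prod_def atLeast0LessThan)
  also have "\<dots> = (\<Sum>k<m. \<Sum>i<n. B $$ (k, i) * A $$ (i, k))"
    by (subst sum.swap) (simp add: mult.commute)
  also have "\<dots> = mat_trace (B * A)"
    using A B by (simp add: mat_trace_def scalar_prod_def atLeast0LessThan)
  finally show ?thesis .
qed

lemma pow_mat_Suc_left:
  assumes "A \<in> carrier_mat n n"
  shows "A ^\<^sub>m Suc k = A * A ^\<^sub>m k"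
  using assms by (induction k) (simp_all add: assoc_mult_mat[of _ n n _ n _ n])

lemma pow_mat_mult_comm:
  assumes X: "X \<in> carrier_mat a b" and Y: "Y \<in> carrier_mat b a"
  shows "(X * Y) ^\<^sub>m q * X = X * (Y * X) ^\<^sub>m q"
proof (induction q)
  case 0
  then show ?case using X Y by simp
next
  case (Suc q)
  have XY: "X * Y \<in> carrier_mat a a" and YX: "Y * X \<in> carrier_mat b b" using X Y by auto
  have XYq: "(X * Y) ^\<^sub>m q \<in> carrier_mat a a" and YXq: "(Y * X) ^\<^sub>m q \<in> carrier_mat b b"
    using XY YX by auto
  have "(X * Y) ^\<^sub>m Suc q * X = (X * Y) ^\<^sub>m q * ((X * Y) * X)"
    by (simp add: assoc_mult_mat[OF XYq XY X])
  also have "\<dots> = ((X * Y) ^\<^sub>m q * X) * (Y * X)"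
    by (simp add: assoc_mult_mat[OF X Y X] assoc_mult_mat[OF XYq X YX])
  also have "\<dots> = X * (Y * X) ^\<^sub>m Suc q"
    using Suc X YXq YX by (simp add: assoc_mult_mat[of _ a b _ b _ b])
  finally show ?case .
qed

lemma mat_trace_pow_mult_comm:
  assumes X: "X \<in> carrier_mat a b" and Y: "Y \<in> carrier_mat b a"
  shows "mat_trace ((X * Y) ^\<^sub>m Suc q) = mat_trace ((Y * X) ^\<^sub>m Suc q)"
proof -
  have XYq: "(X * Y) ^\<^sub>m q \<in> carrier_mat a a" and YXq: "(Y * X) ^\<^sub>m q \<in> carrier_mat b b"
    using X Y by auto
  have "(X * Y) ^\<^sub>m Suc q = ((X * Y) ^\<^sub>m q * X) * Y"
    using XYq X Y by (simp add: assoc_mult_mat[of _ a a _ b _ a])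
  also have "\<dots> = X * ((Y * X) ^\<^sub>m q * Y)"
    using pow_mat_mult_comm[OF X Y] X Y YXq by (simp add: assoc_mult_mat[of _ a b _ b _ a])
  finally have "mat_trace ((X * Y) ^\<^sub>m Suc q) = mat_trace (X * ((Y * X) ^\<^sub>m q * Y))"
    by simp
  also have "\<dots> = mat_trace (((Y * X) ^\<^sub>m q * Y) * X)"
    using X Y YXq by (intro mat_trace_mult_comm) auto
  also have "\<dots> = mat_trace ((Y * X) ^\<^sub>m Suc q)"
    using X Y YXq by (simp add: assoc_mult_mat[of _ b b _ a _ b])
  finally show ?thesis .
qed

lemma upper_triangular_mult:
  assumes A: "A \<in> carrier_mat n n" and B: "B \<in> carrier_mat n n"
    and uA: "upper_triangular A" and uB: "upper_triangular B"
  shows "upper_triangular (A * B)"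
    and "i < n \<Longrightarrow> (A * B) $$ (i, i) = A $$ (i, i) * B $$ (i, i)"
proof -
  have entry: "(A * B) $$ (i, j) = (\<Sum>k<n. A $$ (i, k) * B $$ (k, j))" if "i < n" "j < n" for i j
    using A B that by (simp add: scalar_prod_def atLeast0LessThan)
  have zero: "A $$ (i, k) * B $$ (k, j) = 0" if "k < i \<or> j < k" "i < n" "k < n" for i j k
    using that uA uB A B by (auto dest: upper_triangularD)
  show "upper_triangular (A * B)"
  proof (rule upper_triangularI)
    fix i j assume ji: "j < i" and i: "i < dim_row (A * B)"
    have "(\<Sum>k<n. A $$ (i, k) * B $$ (k, j)) = 0"
      using ji i A by (intro sum.neutral ballI zero) auto
    then show "(A * B) $$ (i, j) = 0"
      using ji i A by (simp add: entry)
  qed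
  show "(A * B) $$ (i, i) = A $$ (i, i) * B $$ (i, i)" if "i < n"
  proof -
    have "(\<Sum>k<n. A $$ (i, k) * B $$ (k, i)) = (\<Sum>k\<in>{i}. A $$ (i, k) * B $$ (k, i))"
      using that by (intro sum.mono_neutral_right) (auto intro: zero)
    then show ?thesis using that by (simp add: entry)
  qed
qed

lemma upper_triangular_pow:
  assumes A: "A \<in> carrier_mat n n" and uA: "upper_triangular A"
  shows "upper_triangular (A ^\<^sub>m m) \<and> (\<forall>i<n. (A ^\<^sub>m m) $$ (i, i) = A $$ (i, i) ^ m)"
proof (induction m)
  case 0
  then show ?case using A by auto
next
  case (Suc m)
  have "A ^\<^sub>m m \<in> carrier_mat n n" using A by simp
  then show ?case
    using upper_triangular_mult[OF _ A _ uA] Suc by (simp add: power_Suc2 del: power_Suc)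
qed

lemma similar_mat_wit_map_mat:
  assumes "comm_ring_hom h" and "similar_mat_wit A B P Q"
  shows "similar_mat_wit (map_mat h A) (map_mat h B) (map_mat h P) (map_mat h Q)"
proof -
  interpret comm_ring_hom h by fact
  define n where "n = dim_row A"
  note wit = similar_mat_witD[OF n_def assms(2)]
  have "map_mat h P * map_mat h Q = 1\<^sub>m n" "map_mat h Q * map_mat h P = 1\<^sub>m n"
    using wit(1,2) mat_hom_mult[OF wit(6,7)] mat_hom_mult[OF wit(7,6)] by (simp_all add: mat_hom_one)
  moreover have "map_mat h A = map_mat h P * map_mat h B * map_mat h Q"
    using wit(3) mat_hom_mult[OF mult_carrier_mat[OF wit(6,5)] wit(7)] mat_hom_mult[OF wit(6,5)]
    by simp
  ultimately show ?thesis
    using wit(4-7) by (intro similar_mat_witI[of _ _ n]) auto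
qed

lemma similar_mat_wit_one_minus:
  fixes A :: "'a::comm_ring_1 mat"
  assumes "similar_mat_wit A B P Q"
  shows "similar_mat_wit (1\<^sub>m (dim_row A) - A) (1\<^sub>m (dim_row A) - B) P Q"
proof -
  define n where "n = dim_row A"
  note wit = similar_mat_witD[OF n_def assms]
  have "P * (1\<^sub>m n - B) = P - P * B"
    using mult_minus_distrib_mat[OF wit(6) one_carrier_mat wit(5)] wit(6) by simp
  then have "P * (1\<^sub>m n - B) * Q = P * Q - P * B * Q"
    using minus_mult_distrib_mat[of P n n "P * B" Q n] wit(5-7) by simp
  then show ?thesis
    unfolding n_def[symmetric] using wit by (intro similar_mat_witI[of _ _ n]) auto
qed

lemma comm_ring_hom_fps_const: "comm_ring_hom (fps_const :: 'a::comm_ring_1 \<Rightarrow> 'a fps)"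
  by unfold_locales (auto simp: fps_const_add fps_const_mult)

lemma det_one_minus_similar_upper_triangular:
  fixes B :: "complex mat"
  assumes B: "B \<in> carrier_mat n n" and sw: "similar_mat_wit B T P Q" and uT: "upper_triangular T"
  shows "det (1\<^sub>m n - map_mat (\<lambda>x. Y * fps_const x) B) = (\<Prod>l\<leftarrow>diag_mat T. 1 - Y * fps_const l)"
proof -
  let ?h = "map_mat fps_const"
  have T: "T \<in> carrier_mat n n" by (rule similar_mat_witD2(5)[OF B sw])
  have "similar_mat_wit (Y \<cdot>\<^sub>m ?h B) (Y \<cdot>\<^sub>m ?h T) (?h P) (?h Q)"
    by (intro similar_mat_wit_smult similar_mat_wit_map_mat[OF comm_ring_hom_fps_const sw])
  from similar_mat_wit_one_minus[OF this]
  have "similar_mat (1\<^sub>m n - Y \<cdot>\<^sub>m ?h B) (1\<^sub>m n - Y \<cdot>\<^sub>m ?h T)"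
    using B unfolding similar_mat_def by auto
  then have "det (1\<^sub>m n - Y \<cdot>\<^sub>m ?h B) = det (1\<^sub>m n - Y \<cdot>\<^sub>m ?h T)"
    by (rule det_similar)
  also have "\<dots> = prod_list (diag_mat (1\<^sub>m n - Y \<cdot>\<^sub>m ?h T))"
    by (rule det_upper_triangular[of _ n]) (use uT T in \<open>auto simp: upper_triangular_def\<close>)
  also have "diag_mat (1\<^sub>m n - Y \<cdot>\<^sub>m ?h T) = map (\<lambda>l. 1 - Y * fps_const l) (diag_mat T)"
    using T unfolding diag_mat_def by auto
  also have "1\<^sub>m n - Y \<cdot>\<^sub>m ?h B = 1\<^sub>m n - map_mat (\<lambda>x. Y * fps_const x) B"
    by (rule eq_matI) auto
  finally show ?thesis .
qed

lemma mat_trace_pow_similar_upper_triangular: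
  assumes B: "B \<in> carrier_mat n n" and sw: "similar_mat_wit B T P Q" and uT: "upper_triangular T"
  shows "mat_trace (B ^\<^sub>m m) = (\<Sum>l\<leftarrow>diag_mat T. l ^ m)"
proof -
  note wit = similar_mat_witD2[OF B sw]
  have T: "T \<in> carrier_mat n n" and Tm: "T ^\<^sub>m m \<in> carrier_mat n n" using wit(5) by auto
  have "mat_trace (B ^\<^sub>m m) = mat_trace (P * (T ^\<^sub>m m * Q))"
    using similar_mat_wit_pow_id[OF sw] wit(6,7) Tm by (simp add: assoc_mult_mat)
  also have "\<dots> = mat_trace (T ^\<^sub>m m * Q * P)"
    using wit(6,7) Tm by (intro mat_trace_mult_comm) auto
  also have "\<dots> = mat_trace (T ^\<^sub>m m)"
    using wit(2,6,7) Tm by (simp add: assoc_mult_mat[of _ n n _ n _ n] right_mult_one_mat[OF Tm])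
  also have "\<dots> = (\<Sum>i<n. T $$ (i, i) ^ m)"
    using upper_triangular_pow[OF T uT, of m] T unfolding mat_trace_def by simp
  finally show ?thesis
    using T by (simp add: diag_mat_def sum_list_sum_nth atLeast0LessThan)
qed

lemma exists_eigenvalue_list:
  fixes B :: "complex mat"
  assumes B: "B \<in> carrier_mat n n"
  shows "\<exists>ls. (\<forall>Y. det (1\<^sub>m n - map_mat (\<lambda>x. Y * fps_const x) B) = (\<Prod>l\<leftarrow>ls. 1 - Y * fps_const l))
    \<and> (\<forall>m. mat_trace (B ^\<^sub>m m) = (\<Sum>l\<leftarrow>ls. l ^ m))"
proof -
  obtain ls where "char_poly B = (\<Prod>a\<leftarrow>ls. [:- a, 1:])"
    using char_poly_factorized[OF B] by blast
  moreover obtain T P Q where "schur_decomposition B ls = (T, P, Q)"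
    by (cases "schur_decomposition B ls") auto
  ultimately have "similar_mat_wit B T P Q" "upper_triangular T"
    using schur_decomposition[OF B] by blast+
  then show ?thesis
    using det_one_minus_similar_upper_triangular[OF B] mat_trace_pow_similar_upper_triangular[OF B]
    by blast
qed

definition eigenvalue_list :: "complex mat \<Rightarrow> complex list" where
  "eigenvalue_list B = (SOME ls.
     (\<forall>Y. det (1\<^sub>m (dim_row B) - map_mat (\<lambda>x. Y * fps_const x) B) = (\<Prod>l\<leftarrow>ls. 1 - Y * fps_const l))
     \<and> (\<forall>m. mat_trace (B ^\<^sub>m m) = (\<Sum>l\<leftarrow>ls. l ^ m)))"

lemma eigenvalue_list_spec:
  assumes "B \<in> carrier_mat n n"
  shows "(\<forall>Y. det (1\<^sub>m (dim_row B) - map_mat (\<lambda>x. Y * fps_const x) B) = (\<Prod>l\<leftarrow>eigenvalue_list B. 1 - Y * fps_const l))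
    \<and> (\<forall>m. mat_trace (B ^\<^sub>m m) = (\<Sum>l\<leftarrow>eigenvalue_list B. l ^ m))"
  unfolding eigenvalue_list_def
  by (rule someI_ex) (use exists_eigenvalue_list[OF assms] assms in simp)

lemma det_one_minus_eq_prod_eigenvalue_list:
  "B \<in> carrier_mat n n \<Longrightarrow>
    det (1\<^sub>m (dim_row B) - map_mat (\<lambda>x. Y * fps_const x) B) = (\<Prod>l\<leftarrow>eigenvalue_list B. 1 - Y * fps_const l)"
  using eigenvalue_list_spec by blast

lemma mat_trace_pow_eq_sum_eigenvalue_list:
  "B \<in> carrier_mat n n \<Longrightarrow> mat_trace (B ^\<^sub>m m) = (\<Sum>l\<leftarrow>eigenvalue_list B. l ^ m)"
  using eigenvalue_list_spec by blast

section \<open>Periods of words\<close>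

definition period :: "'a list \<Rightarrow> nat" where
  "period c = (LEAST k. 0 < k \<and> rotate k c = c)"

lemma rotate_inject: "rotate k x = rotate k y \<Longrightarrow> x = y"
proof (induction k)
  case 0 then show ?case by simp
next
  case (Suc k)
  have "rotate k x = rotate k y" using injD[OF inj_rotate1] Suc.prems by simp
  then show ?case by (rule Suc.IH)
qed

lemma rotate_mult_self: "rotate k c = c \<Longrightarrow> rotate (j * k) c = c"
proof (induction j)
  case 0 then show ?case by simp
next
  case (Suc j)
  have "rotate (Suc j * k) c = rotate k (rotate (j * k) c)" by (simp add: rotate_rotate add.commute)
  then show ?case using Suc by simp
qed

lemma period_spec:
  assumes "c \<noteq> []"
  shows "0 < period c \<and> rotate (period c) c = c \<and> period c \<le> length c"
proof -
  have ex: "0 < length c \<and> rotate (length c) c = c" using assms by simp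
  have "0 < period c \<and> rotate (period c) c = c" unfolding period_def by (rule LeastI[of _ "length c"]) (rule ex)
  moreover have "period c \<le> length c" unfolding period_def by (rule Least_le) (rule ex)
  ultimately show ?thesis by simp
qed

lemma period_dvd:
  assumes "c \<noteq> []" "rotate k c = c"
  shows "period c dvd k"
proof -
  let ?p = "period c"
  have p: "0 < ?p" "rotate ?p c = c" using period_spec[OF assms(1)] by auto
  have "rotate (k div ?p * ?p) c = c" using rotate_mult_self[OF p(2)] .
  then have "rotate (k mod ?p) c = rotate (k mod ?p) (rotate (k div ?p * ?p) c)" by simp
  also have "\<dots> = rotate k c" by (simp add: rotate_rotate)
  finally have r: "rotate (k mod ?p) c = c" using assms(2) by simp
  show ?thesis
  proof (rule ccontr)
    assume "\<not> ?p dvd k"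
    then have "0 < k mod ?p" by (simp add: dvd_eq_mod_eq_0)
    then have "?p \<le> k mod ?p" using Least_le[of "\<lambda>k. 0 < k \<and> rotate k c = c", folded period_def] r by blast
    moreover have "k mod ?p < ?p" using p by simp
    ultimately show False by simp
  qed
qed

lemma nth_rotate_mult_self:
  assumes "rotate t c = c" "i < length c"
  shows "c ! ((j * t + i) mod length c) = c ! i"
proof -
  have "rotate (j * t) c = c" using rotate_mult_self[OF assms(1)] .
  then have "rotate (j * t) c ! i = c ! i" by simp
  then show ?thesis using nth_rotate[OF assms(2)] by simp
qed

lemma nth_mod_period:
  assumes "c \<noteq> []" "i < length c"
  shows "c ! i = c ! (i mod period c)"
proof -
  let ?p = "period c"
  have p: "0 < ?p" "rotate ?p c = c" "?p \<le> length c" using period_spec[OF assms(1)] by auto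
  have lt: "i mod ?p < length c" using p by (meson less_le_trans mod_less_divisor)
  have "c ! (((i div ?p) * ?p + i mod ?p) mod length c) = c ! (i mod ?p)"
    by (rule nth_rotate_mult_self[OF p(2) lt])
  moreover have "(i div ?p) * ?p + i mod ?p = i" by simp
  ultimately show ?thesis using assms by simp
qed

lemma rotate_eq_selfI:
  assumes "0 < t" "t dvd length c" "\<forall>i<length c. c ! i = c ! (i mod t)"
  shows "rotate t c = c"
proof (rule nth_equalityI)
  show "length (rotate t c) = length c" by simp
  fix i assume i: "i < length (rotate t c)"
  then have i': "i < length c" by simp
  have "rotate t c ! i = c ! ((t + i) mod length c)" using nth_rotate[OF i'] .
  also have "\<dots> = c ! ((t + i) mod length c mod t)"
    using assms(3) i' by (metis length_greater_0_conv list.size(3) mod_less_divisor not_less0)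
  also have "(t + i) mod length c mod t = i mod t" using assms(2) by (simp add: mod_mod_cancel)
  also have "c ! (i mod t) = c ! i" using assms(3) i' by simp
  finally show "rotate t c ! i = c ! i" .
qed

lemma length_concat_replicate: "length (concat (replicate m d)) = m * length d"
  by (induction m) auto

lemma nth_concat_replicate: "i < m * length d \<Longrightarrow> concat (replicate m d) ! i = d ! (i mod length d)"
proof (induction m arbitrary: i)
  case 0 then show ?case by simp
next
  case (Suc m)
  show ?case
  proof (cases "i < length d")
    case True then show ?thesis by (simp add: nth_append)
  next
    case False
    then have "i - length d < m * length d" using Suc.prems by simp
    then have "concat (replicate m d) ! (i - length d) = d ! ((i - length d) mod length d)" by (rule Suc.IH)
    moreover have "(i - length d) mod length d = i mod length d" using False by (simp add: mod_if)
    ultimately show ?thesis using False by (simp add: nth_append length_concat_replicate)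
  qed
qed

lemma eq_concat_replicateI:
  assumes "length c = m * length d" "\<forall>i<length c. c ! i = d ! (i mod length d)"
  shows "c = concat (replicate m d)"
proof (rule nth_equalityI)
  show "length c = length (concat (replicate m d))" using assms(1) length_concat_replicate by metis
  fix i assume "i < length c"
  then show "c ! i = concat (replicate m d) ! i" using assms nth_concat_replicate by metis
qed

lemma rotate_length_concat_replicate:
  "rotate (length d) (concat (replicate m d)) = concat (replicate m d)"
proof (cases m)
  case (Suc k)
  have "concat (replicate k d) @ d = concat (replicate k d @ [d])" by simp
  also have "replicate k d @ [d] = replicate (Suc k) d" by (simp add: replicate_append_same)
  finally show ?thesis using Suc by (simp add: rotate_append)
qed simp

lemma nonprimitive_iff_period_less:
  assumes "c \<noteq> []"
  shows "(\<exists>d m. m \<ge> 2 \<and> c = concat (replicate m d)) \<longleftrightarrow> period c < length c"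
proof
  assume "\<exists>d m. m \<ge> 2 \<and> c = concat (replicate m d)"
  then obtain d m where m: "m \<ge> 2" and c: "c = concat (replicate m d)" by blast
  have lc: "length c = m * length d" using c length_concat_replicate by simp
  have dne: "0 < length d" using assms lc by (cases "length d") auto
  have "rotate (length d) c = c" unfolding c by (rule rotate_length_concat_replicate)
  then have "period c dvd length d" by (rule period_dvd[OF assms])
  then have "period c \<le> length d" using dne by (simp add: dvd_imp_le)
  also have "length d < length c" using lc m dne by simp
  finally show "period c < length c" .
next
  assume lt: "period c < length c"
  let ?p = "period c"
  have p: "0 < ?p" "rotate ?p c = c" using period_spec[OF assms] by auto
  have pd: "?p dvd length c" using period_dvd[OF assms] assms by simp
  obtain m where m: "length c = m * ?p" using pd by (auto simp: dvd_def mult.commute)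
  have m2: "m \<ge> 2"
  proof (rule ccontr)
    assume "\<not> m \<ge> 2"
    then have "m = 0 \<or> m = 1" by auto
    then show False using m lt assms by auto
  qed
  have "c = concat (replicate m (take ?p c))"
  proof (rule eq_concat_replicateI)
    show "length c = m * length (take ?p c)" using m lt by simp
    show "\<forall>i<length c. c ! i = take ?p c ! (i mod length (take ?p c))"
      using nth_mod_period[OF assms] lt p by simp
  qed
  then show "\<exists>d m. m \<ge> 2 \<and> c = concat (replicate m d)" using m2 by blast
qed


lemma period_concat_replicate:
  assumes "d \<noteq> []" "period d = length d" "m \<ge> 1"
  shows "period (concat (replicate m d)) = length d"
proof -
  let ?c = "concat (replicate m d)"
  have lc: "length ?c = m * length d" by (rule length_concat_replicate)
  have cne: "?c \<noteq> []" using assms lc by (metis length_0_conv mult_is_0 not_one_le_zero)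
  have cn: "\<And>i. i < length ?c \<Longrightarrow> ?c ! i = d ! (i mod length d)" using nth_concat_replicate lc by metis
  have rot: "rotate (length d) ?c = ?c" by (rule rotate_length_concat_replicate)
  let ?p = "period ?c"
  have pd: "?p dvd length d" using period_dvd[OF cne rot] .
  have p0: "0 < ?p" using period_spec[OF cne] by simp
  have dl: "length d \<le> length ?c" using lc assms(3) by simp
  have "rotate ?p d = d"
  proof (rule rotate_eq_selfI[OF p0 pd], intro allI impI)
    fix i assume i: "i < length d"
    have i2: "i mod ?p < length d" using i mod_less_eq_dividend[of i ?p] by linarith
    have "d ! i = ?c ! i" using cn[of i] i dl by simp
    also have "\<dots> = ?c ! (i mod ?p)" using nth_mod_period[OF cne, of i] i dl by simp
    also have "\<dots> = d ! (i mod ?p)" using cn[of "i mod ?p"] i2 dl by simp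
    finally show "d ! i = d ! (i mod ?p)" .
  qed
  then have "period d dvd ?p" using period_dvd[OF assms(1)] by simp
  then have "length d \<le> ?p" using assms(2) p0 by (simp add: dvd_imp_le)
  moreover have "?p \<le> length d" using pd assms(1) by (simp add: dvd_imp_le)
  ultimately show ?thesis by simp
qed

lemma period_take_period:
  assumes "c \<noteq> []"
  shows "period (take (period c) c) = period c" "length (take (period c) c) = period c"
proof -
  let ?p = "period c" and ?d = "take (period c) c"
  have p: "0 < ?p" "rotate ?p c = c" "?p \<le> length c" using period_spec[OF assms] by auto
  show ld: "length ?d = ?p" using p by simp
  have dne: "?d \<noteq> []" using ld p by auto
  let ?q = "period ?d"
  have q: "0 < ?q" "rotate ?q ?d = ?d" "?q \<le> length ?d" using period_spec[OF dne] by auto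
  have qp: "?q dvd ?p" using period_dvd[OF dne, of "length ?d"] ld by simp
  have pn: "?p dvd length c" using period_dvd[OF assms, of "length c"] by simp
  have "rotate ?q c = c"
  proof (rule rotate_eq_selfI[OF q(1)])
    show "?q dvd length c" using qp pn by (rule dvd_trans)
    show "\<forall>i<length c. c ! i = c ! (i mod ?q)"
    proof (intro allI impI)
      fix i assume i: "i < length c"
      have imp: "i mod ?p < ?p" using p by simp
      have "i mod ?q < ?q" using q(1) by simp
      then have iq: "i mod ?q < ?p" using q(3) ld by linarith
      have "c ! i = c ! (i mod ?p)" using nth_mod_period[OF assms i] .
      also have "\<dots> = ?d ! (i mod ?p)" using imp by simp
      also have "\<dots> = ?d ! (i mod ?p mod ?q)" using nth_mod_period[OF dne, of "i mod ?p"] imp ld by simp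
      also have "i mod ?p mod ?q = i mod ?q" using qp by (simp add: mod_mod_cancel)
      also have "?d ! (i mod ?q) = c ! (i mod ?q)" using iq by simp
      finally show "c ! i = c ! (i mod ?q)" .
    qed
  qed
  then have "?p dvd ?q" using period_dvd[OF assms] by simp
  then show "?q = ?p" using qp by (simp add: dvd_antisym)
qed

lemma period_rotate: "period (rotate k c) = period c"
proof -
  have "\<And>j. rotate j (rotate k c) = rotate k c \<longleftrightarrow> rotate j c = c"
  proof -
    fix j
    have "rotate j (rotate k c) = rotate k (rotate j c)" by (simp add: rotate_rotate add.commute)
    then show "rotate j (rotate k c) = rotate k c \<longleftrightarrow> rotate j c = c" using rotate_inject by metis
  qed
  then show ?thesis unfolding period_def by simp
qed

lemma take_concat_replicate: "m \<ge> 1 \<Longrightarrow> take (length d) (concat (replicate m d)) = d"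
  by (cases m) auto

lemma primitive_root_unique:
  assumes "d \<noteq> []" "period d = length d" "q \<ge> 1"
    and "d' \<noteq> []" "period d' = length d'" "q' \<ge> 1"
    and "concat (replicate q d) = concat (replicate q' d')"
  shows "d = d'"
proof -
  have "length d = length d'"
    using period_concat_replicate[OF assms(1-3)] period_concat_replicate[OF assms(4-6)] assms(7)
    by simp
  then show ?thesis
    using take_concat_replicate[OF assms(3), of d] take_concat_replicate[OF assms(6), of d'] assms(7)
    by metis
qed

section \<open>Closed geodesics and prime cycles\<close>

lemma prime_geodesic_iff_period:
  "prime_geodesic F c \<longleftrightarrow> closed_geodesic F c \<and> period c = length c"
proof (cases "c = []")
  case True then show ?thesis by (simp add: prime_geodesic_def closed_geodesic_def)
next
  case False
  then show ?thesis using nonprimitive_iff_period_less[OF False] period_spec[OF False]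
    unfolding prime_geodesic_def by auto
qed

lemma closed_geodesic_rotate:
  assumes "closed_geodesic F c"
  shows "closed_geodesic F (rotate k c)"
proof -
  have cne: "c \<noteq> []" and cD: "set c \<subseteq> dedges F"
    and ch: "\<forall>l<length c. feeds (c ! l) (c ! (Suc l mod length c))"
    using assms by (auto simp: closed_geodesic_def)
  let ?n = "length c"
  have "\<forall>l<length (rotate k c). feeds (rotate k c ! l) (rotate k c ! (Suc l mod length (rotate k c)))"
  proof (intro allI impI)
    fix l assume l: "l < length (rotate k c)"
    then have l': "l < ?n" by simp
    have n0: "0 < ?n" using cne by simp
    have a: "rotate k c ! l = c ! ((k + l) mod ?n)" using nth_rotate[OF l'] .
    have b: "rotate k c ! (Suc l mod ?n) = c ! ((k + Suc l mod ?n) mod ?n)"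
      using nth_rotate[of "Suc l mod ?n" c k] n0 by simp
    have "(k + Suc l mod ?n) mod ?n = Suc ((k + l) mod ?n) mod ?n"
      by (simp add: mod_add_right_eq mod_Suc_eq)
    moreover have "(k + l) mod ?n < ?n" using n0 by simp
    ultimately show "feeds (rotate k c ! l) (rotate k c ! (Suc l mod length (rotate k c)))"
      using ch a b by simp
  qed
  then show ?thesis using cne cD by (simp add: closed_geodesic_def)
qed

lemma prime_geodesic_rotate: "prime_geodesic F c \<Longrightarrow> prime_geodesic F (rotate k c)"
  using closed_geodesic_rotate period_rotate prime_geodesic_iff_period by (metis length_rotate)

lemma closed_geodesic_nth_mod:
  assumes "closed_geodesic F c"
  shows "c ! (i mod length c) \<in> dedges F"
    and "feeds (c ! (i mod length c)) (c ! (Suc i mod length c))"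
proof -
  have cne: "c \<noteq> []" and cD: "set c \<subseteq> dedges F"
    and chain: "\<forall>l<length c. feeds (c ! l) (c ! (Suc l mod length c))"
    using assms by (auto simp: closed_geodesic_def)
  have i: "i mod length c < length c" using cne by simp
  then show "c ! (i mod length c) \<in> dedges F" using cD by auto
  have "feeds (c ! (i mod length c)) (c ! (Suc (i mod length c) mod length c))"
    using chain i by simp
  then show "feeds (c ! (i mod length c)) (c ! (Suc i mod length c))"
    by (simp add: mod_Suc_eq)
qed

lemma closed_geodesic_concat_replicate:
  assumes "closed_geodesic F d" "m \<ge> 1"
  shows "closed_geodesic F (concat (replicate m d))"
proof -
  let ?c = "concat (replicate m d)" and ?k = "length d"
  have dne: "d \<noteq> []" and dD: "set d \<subseteq> dedges F"
    and ch: "\<forall>l<length d. feeds (d ! l) (d ! (Suc l mod length d))"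
    using assms by (auto simp: closed_geodesic_def)
  have lc: "length ?c = m * ?k" by (rule length_concat_replicate)
  have k0: "0 < ?k" using dne by simp
  have cne: "?c \<noteq> []" using lc k0 assms(2) by (metis length_0_conv mult_is_0 not_one_le_zero neq0_conv)
  have cD: "set ?c \<subseteq> dedges F" using dD assms(2) by auto
  have "\<forall>l<length ?c. feeds (?c ! l) (?c ! (Suc l mod length ?c))"
  proof (intro allI impI)
    fix l assume l: "l < length ?c"
    have a: "?c ! l = d ! (l mod ?k)" using nth_concat_replicate[of l m d] l lc by simp
    have "0 < length ?c" using l by linarith
    then have "Suc l mod length ?c < length ?c" by simp
    then have "?c ! (Suc l mod length ?c) = d ! (Suc l mod length ?c mod ?k)"
      using nth_concat_replicate[of "Suc l mod length ?c" m d] lc by simp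
    also have "Suc l mod length ?c mod ?k = Suc (l mod ?k) mod ?k"
      using lc by (simp add: mod_mod_cancel mod_Suc_eq)
    finally show "feeds (?c ! l) (?c ! (Suc l mod length ?c))" using a ch k0 by simp
  qed
  then show ?thesis using cne cD by (simp add: closed_geodesic_def)
qed

lemma closed_geodesic_take_period:
  assumes "closed_geodesic F c"
  shows "closed_geodesic F (take (period c) c)"
proof -
  have cne: "c \<noteq> []" and cD: "set c \<subseteq> dedges F"
    and ch: "\<forall>l<length c. feeds (c ! l) (c ! (Suc l mod length c))"
    using assms by (auto simp: closed_geodesic_def)
  let ?p = "period c" and ?d = "take (period c) c"
  have p: "0 < ?p" "rotate ?p c = c" "?p \<le> length c" using period_spec[OF cne] by auto
  have pn: "?p dvd length c" using period_dvd[OF cne, of "length c"] by simp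
  have ld: "length ?d = ?p" using p by simp
  have "\<forall>l<length ?d. feeds (?d ! l) (?d ! (Suc l mod length ?d))"
  proof (intro allI impI)
    fix l assume l: "l < length ?d"
    then have l': "l < length c" using ld p by simp
    have "c ! (Suc l mod length c) = c ! (Suc l mod length c mod ?p)"
      using nth_mod_period[OF cne, of "Suc l mod length c"] cne by simp
    also have "Suc l mod length c mod ?p = Suc l mod ?p" using pn by (simp add: mod_mod_cancel)
    also have "c ! (Suc l mod ?p) = ?d ! (Suc l mod ?p)" using p by simp
    finally have e: "c ! (Suc l mod length c) = ?d ! (Suc l mod ?p)" .
    have "feeds (c ! l) (c ! (Suc l mod length c))" using ch l' by simp
    then show "feeds (?d ! l) (?d ! (Suc l mod length ?d))" using e l ld by simp
  qed
  moreover have "?d \<noteq> []" using ld p by auto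
  moreover have "set ?d \<subseteq> dedges F" using cD by (meson order_trans set_take_subset)
  ultimately show ?thesis by (simp add: closed_geodesic_def)
qed

lemma closed_geodesic_primitive_root:
  assumes "closed_geodesic F c"
  shows "prime_geodesic F (take (period c) c)"
    and "period c dvd length c"
    and "c = concat (replicate (length c div period c) (take (period c) c))"
proof -
  have cne: "c \<noteq> []" using assms by (simp add: closed_geodesic_def)
  let ?p = "period c" and ?d = "take (period c) c"
  have tp: "period ?d = ?p" "length ?d = ?p" using period_take_period[OF cne] by auto
  have p: "0 < ?p" "?p \<le> length c" using period_spec[OF cne] by auto
  show "prime_geodesic F ?d"
    unfolding prime_geodesic_iff_period using closed_geodesic_take_period[OF assms] tp by simp
  show pn: "?p dvd length c" using period_dvd[OF cne, of "length c"] by simp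
  show "c = concat (replicate (length c div ?p) ?d)"
  proof (rule eq_concat_replicateI)
    show "length c = length c div ?p * length ?d" using tp pn by simp
    show "\<forall>i<length c. c ! i = ?d ! (i mod length ?d)"
      using nth_mod_period[OF cne] tp p by simp
  qed
qed

lemma prime_geodesic_power_bij:
  assumes "m \<ge> 1"
  shows "bij_betw (\<lambda>d. concat (replicate (m div length d) d))
     {d. prime_geodesic F d \<and> length d dvd m} {c. closed_geodesic F c \<and> length c = m}"
proof (rule bij_betwI')
  fix d d' assume "d \<in> {d. prime_geodesic F d \<and> length d dvd m}" "d' \<in> {d. prime_geodesic F d \<and> length d dvd m}"
  then show "(concat (replicate (m div length d) d) = concat (replicate (m div length d') d')) = (d = d')"
    using primitive_root_unique[of d "m div length d" d' "m div length d'"] assms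
    by (auto simp: prime_geodesic_iff_period closed_geodesic_def dvd_imp_le div_greater_zero_iff
        Suc_le_eq)
next
  fix d assume d: "d \<in> {d. prime_geodesic F d \<and> length d dvd m}"
  then have "d \<noteq> []" "closed_geodesic F d" by (auto simp: prime_geodesic_def closed_geodesic_def)
  then have "m div length d \<ge> 1" using d assms by (auto simp: dvd_imp_le div_greater_zero_iff Suc_le_eq)
  then show "concat (replicate (m div length d) d) \<in> {c. closed_geodesic F c \<and> length c = m}"
    using closed_geodesic_concat_replicate[OF \<open>closed_geodesic F d\<close>] d
    by (simp add: length_concat_replicate)
next
  fix c assume c: "c \<in> {c. closed_geodesic F c \<and> length c = m}"
  then have "c \<noteq> []" by (simp add: closed_geodesic_def)
  then show "\<exists>d\<in>{d. prime_geodesic F d \<and> length d dvd m}. c = concat (replicate (m div length d) d)"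
    using closed_geodesic_primitive_root[of F c] period_take_period[of c] c
    by (intro bexI[where x = "take (period c) c"]) auto
qed

lemma rotate_mem_cyc_class: "c \<noteq> [] \<Longrightarrow> rotate k c \<in> cyc_class c"
  unfolding cyc_class_def by (subst rotate_conv_mod) simp

lemma cyc_class_self: "c \<noteq> [] \<Longrightarrow> c \<in> cyc_class c"
  using rotate_mem_cyc_class[of c 0] by simp

lemma length_mem_cyc_class: "x \<in> cyc_class c \<Longrightarrow> length x = length c"
  unfolding cyc_class_def by auto

lemma cyc_class_rotate:
  assumes "c \<noteq> []"
  shows "cyc_class (rotate k c) = cyc_class c"
proof
  show "cyc_class (rotate k c) \<subseteq> cyc_class c"
    unfolding cyc_class_def[of "rotate k c"] using assms
    by (auto simp: rotate_rotate intro: rotate_mem_cyc_class)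
  show "cyc_class c \<subseteq> cyc_class (rotate k c)"
  proof
    fix x assume "x \<in> cyc_class c"
    then obtain j where x: "x = rotate j c" unfolding cyc_class_def by auto
    let ?n = "length c"
    have "j + (?n - 1) * k + k = j + k * ?n"
      using assms by (cases ?n) (auto simp: algebra_simps)
    then have "rotate (j + (?n - 1) * k) (rotate k c) = rotate (j + k * ?n) c"
      by (simp only: rotate_rotate)
    also have "\<dots> = x"
      unfolding x by (metis mod_mult_self1 rotate_conv_mod)
    finally show "x \<in> cyc_class (rotate k c)"
      using assms rotate_mem_cyc_class[of "rotate k c" "j + (?n - 1) * k"] by simp
  qed
qed

lemma cyc_class_inj:
  assumes "c \<noteq> []" "period c = length c"
  shows "inj_on (\<lambda>i. rotate i c) {..<length c}"
proof (rule inj_onI)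
  fix i j assume i: "i \<in> {..<length c}" and j: "j \<in> {..<length c}" and e: "rotate i c = rotate j c"
  let ?n = "length c"
  have key: "\<And>a b. a < ?n \<Longrightarrow> b < ?n \<Longrightarrow> a < b \<Longrightarrow> rotate a c = rotate b c \<Longrightarrow> False"
  proof -
    fix a b assume a: "a < ?n" and b: "b < ?n" and ab: "a < b" and e: "rotate a c = rotate b c"
    have "rotate (?n - b) (rotate a c) = rotate (?n - b) (rotate b c)" using e by simp
    then have "rotate (?n - b + a) c = rotate ?n c" using b by (simp add: rotate_rotate)
    then have "rotate (?n - b + a) c = c" by simp
    then have "period c dvd (?n - b + a)" using period_dvd[OF assms(1)] by simp
    moreover have "0 < ?n - b + a" "?n - b + a < ?n" using a b ab by auto
    ultimately show False using assms(2) by (metis dvd_imp_le not_le)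
  qed
  have i': "i < ?n" and j': "j < ?n" using i j by auto
  show "i = j"
  proof (rule ccontr)
    assume "i \<noteq> j"
    then consider "i < j" | "j < i" by linarith
    then show False
    proof cases
      case 1 show False by (rule key[OF i' j' 1 e])
    next
      case 2 show False by (rule key[OF j' i' 2 e[symmetric]])
    qed
  qed
qed

lemma card_cyc_class:
  assumes "c \<noteq> []" "period c = length c"
  shows "card (cyc_class c) = length c"
  unfolding cyc_class_def using card_image[OF cyc_class_inj[OF assms]] by simp

lemma mem_prime_cycleD:
  assumes "P \<in> prime_cycles F" "x \<in> P"
  shows "prime_geodesic F x" "P = cyc_class x" "length x = cyc_len P"
proof -
  obtain d where d: "prime_geodesic F d" and P: "P = cyc_class d"
    using assms(1) unfolding prime_cycles_def by auto
  have dne: "d \<noteq> []" using d by (simp add: prime_geodesic_def closed_geodesic_def)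
  obtain i where x: "x = rotate i d" using assms(2) P unfolding cyc_class_def by auto
  show "prime_geodesic F x" using prime_geodesic_rotate[OF d] x by simp
  show "P = cyc_class x" using cyc_class_rotate[OF dne] x P by simp
  have "(SOME c. c \<in> P) \<in> P" using assms(2) by (rule someI)
  then show "length x = cyc_len P"
    using length_mem_cyc_class assms(2) P unfolding cyc_len_def by metis
qed

lemma some_mem_prime_cycle:
  assumes "P \<in> prime_cycles F"
  shows "(SOME c. c \<in> P) \<in> P"
proof -
  obtain d where "prime_geodesic F d" and P: "P = cyc_class d"
    using assms unfolding prime_cycles_def by auto
  then have "d \<noteq> []" by (simp add: prime_geodesic_def closed_geodesic_def)
  then have "d \<in> P" using P cyc_class_self by simp
  then show ?thesis by (rule someI)
qed

lemma card_prime_cycle: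
  assumes "P \<in> prime_cycles F"
  shows "finite P" "card P = cyc_len P"
proof -
  let ?x = "SOME c. c \<in> P"
  have x: "prime_geodesic F ?x" "P = cyc_class ?x" "length ?x = cyc_len P"
    using mem_prime_cycleD[OF assms some_mem_prime_cycle[OF assms]] by auto
  then have "?x \<noteq> []" "period ?x = length ?x"
    by (auto simp: prime_geodesic_iff_period closed_geodesic_def)
  then have "card (cyc_class ?x) = length ?x" by (rule card_cyc_class)
  then show "card P = cyc_len P"
    using x(2,3) by simp
  have "finite (cyc_class ?x)" unfolding cyc_class_def by simp
  then show "finite P" using x(2) by metis
qed

lemma cyc_len_prime_cycle_gt_0:
  assumes "P \<in> prime_cycles F"
  shows "cyc_len P > 0"
proof -
  have "prime_geodesic F (SOME c. c \<in> P)" "length (SOME c. c \<in> P) = cyc_len P"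
    using mem_prime_cycleD[OF assms some_mem_prime_cycle[OF assms]] by auto
  then show ?thesis by (metis prime_geodesic_def closed_geodesic_def length_greater_0_conv)
qed

lemma finite_prime_geodesics_le:
  assumes "finite (dedges F)"
  shows "finite {d. prime_geodesic F d \<and> length d \<le> n}"
proof (rule finite_subset)
  show "{d. prime_geodesic F d \<and> length d \<le> n} \<subseteq> {d. set d \<subseteq> dedges F \<and> length d \<le> n}"
    unfolding prime_geodesic_def closed_geodesic_def by blast
qed (rule finite_lists_length_le[OF assms])

lemma finite_prime_cycles_le:
  assumes "finite (dedges F)"
  shows "finite {P \<in> prime_cycles F. cyc_len P \<le> n}"
proof (rule finite_subset)
  show "{P \<in> prime_cycles F. cyc_len P \<le> n} \<subseteq> cyc_class ` {d. prime_geodesic F d \<and> length d \<le> n}"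
  proof
    fix P assume P: "P \<in> {P \<in> prime_cycles F. cyc_len P \<le> n}"
    let ?x = "SOME c. c \<in> P"
    have PF: "P \<in> prime_cycles F" using P by simp
    then have "?x \<in> P" by (rule some_mem_prime_cycle)
    then have "prime_geodesic F ?x" "P = cyc_class ?x" "length ?x = cyc_len P"
      using mem_prime_cycleD[OF PF] by simp_all
    then show "P \<in> cyc_class ` {d. prime_geodesic F d \<and> length d \<le> n}"
      using P by auto
  qed
qed (use finite_prime_geodesics_le[OF assms] in simp)

lemma sum_prime_geodesics_by_prime_cycles:
  assumes "finite (dedges F)" "m \<ge> 1"
  shows "(\<Sum>d\<in>{d. prime_geodesic F d \<and> length d dvd m}. h d)
       = (\<Sum>P\<in>{P \<in> prime_cycles F. cyc_len P dvd m}. \<Sum>d\<in>P. h d)"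
proof -
  let ?I = "{P \<in> prime_cycles F. cyc_len P dvd m}"
  have sub: "?I \<subseteq> {P \<in> prime_cycles F. cyc_len P \<le> m}" using assms(2) by (auto intro: dvd_imp_le)
  have finI: "finite ?I" using finite_prime_cycles_le[OF assms(1), of m] sub by (rule finite_subset[rotated])
  have U: "{d. prime_geodesic F d \<and> length d dvd m} = \<Union> ?I"
  proof
    show "{d. prime_geodesic F d \<and> length d dvd m} \<subseteq> \<Union> ?I"
    proof
      fix d assume d: "d \<in> {d. prime_geodesic F d \<and> length d dvd m}"
      have dne: "d \<noteq> []" using d by (simp add: prime_geodesic_def closed_geodesic_def)
      have P: "cyc_class d \<in> prime_cycles F" using d unfolding prime_cycles_def by auto
      have "cyc_len (cyc_class d) = length d"
        using mem_prime_cycleD(3)[OF P cyc_class_self[OF dne]] by simp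
      then show "d \<in> \<Union> ?I" using P d cyc_class_self[OF dne] by auto
    qed
    show "\<Union> ?I \<subseteq> {d. prime_geodesic F d \<and> length d dvd m}"
      using mem_prime_cycleD by fastforce
  qed
  have disj: "\<forall>P\<in>?I. \<forall>Q\<in>?I. P \<noteq> Q \<longrightarrow> P \<inter> Q = {}"
  proof (intro ballI impI)
    fix P Q assume P: "P \<in> ?I" and Q: "Q \<in> ?I" and ne: "P \<noteq> Q"
    show "P \<inter> Q = {}"
    proof (rule ccontr)
      assume "P \<inter> Q \<noteq> {}"
      then obtain x where "x \<in> P" "x \<in> Q" by auto
      then have "P = cyc_class x" "Q = cyc_class x" using mem_prime_cycleD(2) P Q by blast+
      then show False using ne by simp
    qed
  qed
  have fin: "\<forall>A\<in>?I. finite A" using card_prime_cycle(1) by blast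
  show ?thesis unfolding U using sum.Union_disjoint[OF fin disj, of h] by simp
qed

lemma sum_prime_cycle_rotation_invariant:
  assumes "P \<in> prime_cycles F"
    and inv: "\<And>k. h (rotate k (SOME c. c \<in> P)) = h (SOME c. c \<in> P)"
  shows "(\<Sum>d\<in>P. h d) = of_nat (cyc_len P) * h (SOME c. c \<in> P)"
proof -
  let ?x = "SOME c. c \<in> P"
  have P: "P = cyc_class ?x"
    using mem_prime_cycleD(2)[OF assms(1) some_mem_prime_cycle[OF assms(1)]] .
  have "h d = h ?x" if "d \<in> P" for d
  proof -
    have "d \<in> cyc_class ?x" using that P by metis
    then obtain k where "d = rotate k ?x" unfolding cyc_class_def by auto
    then show ?thesis using inv by simp
  qed
  then have "(\<Sum>d\<in>P. h d) = of_nat (card P) * h ?x" by simp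
  then show ?thesis using card_prime_cycle(2)[OF assms(1)] by simp
qed

section \<open>Walks and holonomies\<close>

primrec path_prod :: "('e \<Rightarrow> nat) \<Rightarrow> ('e \<Rightarrow> 'e \<Rightarrow> 'a::semiring_1 mat) \<Rightarrow> (nat \<Rightarrow> 'e) \<Rightarrow> nat \<Rightarrow> 'a mat" where
  "path_prod r u f 0 = 1\<^sub>m (r (f 0))"
| "path_prod r u f (Suc l) = u (f l) (f (Suc l)) * path_prod r u f l"

lemma path_prod_cong: "(\<And>i. i \<le> l \<Longrightarrow> f i = g i) \<Longrightarrow> path_prod r u f l = path_prod r u g l"
  by (induction l) auto

lemma pi_mat_eq_path_prod:
  assumes "c \<noteq> []"
  shows "pi_mat r u c = path_prod r u (\<lambda>i. c ! (i mod length c)) (length c)"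
proof -
  have "pi_aux r u c l = path_prod r u (\<lambda>i. c ! (i mod length c)) l" if "l \<le> length c" for l
    using that by (induction l) (simp_all add: assms hd_conv_nth)
  then show ?thesis by (simp add: pi_mat_def)
qed

definition walks :: "'v dedge set \<Rightarrow> nat \<Rightarrow> 'v dedge \<Rightarrow> 'v dedge \<Rightarrow> 'v dedge list set" where
  "walks D n e' e = {v. length v = Suc n \<and> set v \<subseteq> D \<and> v ! 0 = e' \<and> v ! n = e \<and>
     (\<forall>l<n. feeds (v ! l) (v ! Suc l))}"

lemma finite_walks: "finite D \<Longrightarrow> finite (walks D n e' e)"
  by (rule finite_subset[OF _ finite_lists_length_eq[of D "Suc n"]]) (auto simp: walks_def)

lemma walks_0: "e \<in> D \<Longrightarrow> walks D 0 e' e = (if e = e' then {[e]} else {})"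
  by (auto simp: walks_def length_Suc_conv)

lemma walks_Suc_bij:
  assumes "e \<in> D"
  shows "bij_betw (\<lambda>(f, v). v @ [e]) (SIGMA f:{f \<in> D. feeds f e}. walks D n e' f) (walks D (Suc n) e' e)"
proof (rule bij_betwI')
  fix x y assume "x \<in> (SIGMA f:{f \<in> D. feeds f e}. walks D n e' f)" "y \<in> (SIGMA f:{f \<in> D. feeds f e}. walks D n e' f)"
  then show "((\<lambda>(f, v). v @ [e]) x = (\<lambda>(f, v). v @ [e]) y) = (x = y)"
    by (auto simp: walks_def)
next
  fix x assume "x \<in> (SIGMA f:{f \<in> D. feeds f e}. walks D n e' f)"
  then obtain f v where x: "x = (f, v)" and fe: "feeds f e" and v: "v \<in> walks D n e' f"
    by auto
  have "feeds ((v @ [e]) ! l) ((v @ [e]) ! Suc l)" if "l < Suc n" for l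
    using that v fe by (cases "l < n") (auto simp: walks_def nth_append less_Suc_eq)
  then show "(\<lambda>(f, v). v @ [e]) x \<in> walks D (Suc n) e' e"
    using x v assms by (auto simp: walks_def nth_append)
next
  fix w assume w: "w \<in> walks D (Suc n) e' e"
  then have lw: "length w = Suc (Suc n)" and wn: "w ! Suc n = e" by (auto simp: walks_def)
  define v where "v = butlast w"
  have wv: "w = v @ [e]"
    using lw wn unfolding v_def by (metis append_butlast_last_id last_conv_nth list.size(3)
      nat.distinct(1) diff_Suc_1)
  have "v \<in> walks D n e' (w ! n)" "w ! n \<in> D" "feeds (w ! n) e"
    using w wv by (auto simp: walks_def nth_append) (metis less_SucI)
  then show "\<exists>x\<in>(SIGMA f:{f \<in> D. feeds f e}. walks D n e' f). w = (\<lambda>(f, v). v @ [e]) x"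
    using wv by (intro bexI[where x = "(w ! n, v)"]) auto
qed

lemma nth_append_hd_mod:
  assumes "c \<noteq> []" "i \<le> length c"
  shows "(c @ [hd c]) ! i = c ! (i mod length c)"
  using assms by (cases "i < length c") (auto simp: nth_append hd_conv_nth)

lemma closed_geodesic_closed_walk:
  assumes "closed_geodesic F c"
  shows "c @ [hd c] \<in> walks (dedges F) (length c) (hd c) (hd c)"
proof -
  have cne: "c \<noteq> []" and cD: "set c \<subseteq> dedges F"
    and chain: "\<forall>l<length c. feeds (c ! l) (c ! (Suc l mod length c))"
    using assms by (auto simp: closed_geodesic_def)
  have "\<forall>l<length c. feeds ((c @ [hd c]) ! l) ((c @ [hd c]) ! Suc l)"
  proof (intro allI impI)
    fix l assume l: "l < length c"
    have "(c @ [hd c]) ! Suc l = c ! (Suc l mod length c)"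
      using l cne by (intro nth_append_hd_mod) auto
    then show "feeds ((c @ [hd c]) ! l) ((c @ [hd c]) ! Suc l)"
      using chain l by (simp add: nth_append)
  qed
  then show ?thesis
    using cD cne by (auto simp: walks_def nth_append hd_conv_nth)
qed

lemma closed_walk_closed_geodesic:
  assumes "n \<ge> 1" and w: "w \<in> walks (dedges F) n e e"
  shows "closed_geodesic F (butlast w)" "length (butlast w) = n"
    "hd (butlast w) = e" "w = butlast w @ [e]"
proof -
  define c where "c = butlast w"
  show lc: "length (butlast w) = n"
    using w by (auto simp: walks_def)
  have c_nth: "c ! l = w ! l" if "l < n" for l
    using that w by (auto simp: c_def walks_def nth_butlast)
  have "length c \<ge> 1" using lc assms(1) by (simp add: c_def)
  then have "c \<noteq> []" by auto
  then show hd: "hd (butlast w) = e"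
    using c_nth[of 0] assms w by (simp add: c_def hd_conv_nth walks_def)
  have "w \<noteq> []" using w by (auto simp: walks_def)
  moreover have "last w = e" using w \<open>w \<noteq> []\<close> by (simp add: walks_def last_conv_nth)
  ultimately show "w = butlast w @ [e]" by (metis append_butlast_last_id)
  have "c ! (Suc l mod n) = w ! Suc l" if "l < n" for l
  proof (cases "Suc l < n")
    case False
    then have "Suc l = n" using that by simp
    then show ?thesis using c_nth[of 0] assms w by (simp add: walks_def)
  qed (use c_nth in simp)
  then have "\<forall>l<length c. feeds (c ! l) (c ! (Suc l mod length c))"
    using lc c_nth w by (simp add: c_def walks_def)
  moreover have "set w \<subseteq> dedges F" using w by (simp add: walks_def)
  then have "set c \<subseteq> dedges F"
    unfolding c_def by (meson in_set_butlastD subset_iff)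
  ultimately show "closed_geodesic F (butlast w)"
    using \<open>c \<noteq> []\<close> by (simp add: closed_geodesic_def c_def)
qed

lemma closed_geodesic_walks_bij:
  assumes "n \<ge> 1"
  shows "bij_betw (\<lambda>c. (hd c, c @ [hd c])) {c. closed_geodesic F c \<and> length c = n}
    (SIGMA e:dedges F. walks (dedges F) n e e)"
proof (rule bij_betwI')
  fix c assume "c \<in> {c. closed_geodesic F c \<and> length c = n}"
  then show "(hd c, c @ [hd c]) \<in> (SIGMA e:dedges F. walks (dedges F) n e e)"
    using closed_geodesic_closed_walk[of F c]
    by (auto simp: closed_geodesic_def)
next
  fix x assume "x \<in> (SIGMA e:dedges F. walks (dedges F) n e e)"
  then obtain e w where x: "x = (e, w)" and w: "w \<in> walks (dedges F) n e e"
    by auto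
  then show "\<exists>c \<in> {c. closed_geodesic F c \<and> length c = n}. x = (hd c, c @ [hd c])"
    using closed_walk_closed_geodesic[OF assms w] by (intro bexI[where x = "butlast w"]) auto
next
  fix c d
  show "((hd c, c @ [hd c]) = (hd d, d @ [hd d])) = (c = d)" by auto
qed

locale matrix_weights =
  fixes D :: "'v dedge set" and r :: "'v dedge \<Rightarrow> nat" and u :: "'v dedge \<Rightarrow> 'v dedge \<Rightarrow> complex mat"
  assumes finite_D: "finite D"
    and weight_carrier: "\<And>e e'. e \<in> D \<Longrightarrow> e' \<in> D \<Longrightarrow> feeds e' e \<Longrightarrow> u e' e \<in> carrier_mat (r e) (r e')"
begin

lemma path_prod_carrier:
  assumes "\<And>i. i \<le> l \<Longrightarrow> f i \<in> D" "\<And>i. i < l \<Longrightarrow> feeds (f i) (f (Suc i))"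
  shows "path_prod r u f l \<in> carrier_mat (r (f l)) (r (f 0))"
  using assms
proof (induction l)
  case (Suc l)
  then have "u (f l) (f (Suc l)) \<in> carrier_mat (r (f (Suc l))) (r (f l))"
    by (intro weight_carrier) auto
  then show ?case using Suc by auto
qed simp

lemma path_prod_walk_carrier:
  assumes "v \<in> walks D n e' e"
  shows "path_prod r u ((!) v) n \<in> carrier_mat (r e) (r e')"
proof -
  have "v ! i \<in> D" if "i \<le> n" for i
    using assms that nth_mem[of i v] by (auto simp: walks_def)
  then show ?thesis
    using path_prod_carrier[of n "(!) v"] assms by (auto simp: walks_def)
qed

lemma sum_walks_Suc:
  assumes "e \<in> D" "i < r e" "j < r e'"
  shows "(\<Sum>w\<in>walks D (Suc n) e' e. path_prod r u ((!) w) (Suc n) $$ (i, j)) =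
    (\<Sum>f\<in>{f \<in> D. feeds f e}. \<Sum>k<r f. u f e $$ (i, k) *
       (\<Sum>v\<in>walks D n e' f. path_prod r u ((!) v) n $$ (k, j)))"
proof -
  have "(\<Sum>w\<in>walks D (Suc n) e' e. path_prod r u ((!) w) (Suc n) $$ (i, j)) =
      (\<Sum>(f, v)\<in>(SIGMA f:{f \<in> D. feeds f e}. walks D n e' f). path_prod r u ((!) (v @ [e])) (Suc n) $$ (i, j))"
    using sum.reindex_bij_betw[OF walks_Suc_bij[OF assms(1)],
        of "\<lambda>w. path_prod r u ((!) w) (Suc n) $$ (i, j)"]
    by (simp add: split_beta del: path_prod.simps)
  also have "\<dots> = (\<Sum>f\<in>{f \<in> D. feeds f e}. \<Sum>v\<in>walks D n e' f. path_prod r u ((!) (v @ [e])) (Suc n) $$ (i, j))"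
    by (rule sum.Sigma[symmetric]) (use finite_D finite_walks[OF finite_D] in auto)
  also have "\<dots> = (\<Sum>f\<in>{f \<in> D. feeds f e}. \<Sum>v\<in>walks D n e' f. \<Sum>k<r f. u f e $$ (i, k) * path_prod r u ((!) v) n $$ (k, j))"
  proof (intro sum.cong refl)
    fix f v assume f: "f \<in> {f \<in> D. feeds f e}" and v: "v \<in> walks D n e' f"
    have "path_prod r u ((!) (v @ [e])) n = path_prod r u ((!) v) n"
      by (rule path_prod_cong) (use v in \<open>auto simp: walks_def nth_append\<close>)
    then have "path_prod r u ((!) (v @ [e])) (Suc n) = u f e * path_prod r u ((!) v) n"
      using v by (simp add: walks_def nth_append)
    moreover have "u f e \<in> carrier_mat (r e) (r f)"
      using f assms by (auto intro: weight_carrier)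
    ultimately show "path_prod r u ((!) (v @ [e])) (Suc n) $$ (i, j) =
        (\<Sum>k<r f. u f e $$ (i, k) * path_prod r u ((!) v) n $$ (k, j))"
      using assms path_prod_walk_carrier[OF v] by (simp add: scalar_prod_def atLeast0LessThan)
  qed
  also have "\<dots> = (\<Sum>f\<in>{f \<in> D. feeds f e}. \<Sum>k<r f. u f e $$ (i, k) *
       (\<Sum>v\<in>walks D n e' f. path_prod r u ((!) v) n $$ (k, j)))"
    by (simp add: sum_distrib_left sum.swap[of _ "{..<_}"])
  finally show ?thesis .
qed

lemma path_prod_add:
  assumes "\<And>i. i \<le> j + l \<Longrightarrow> f i \<in> D" "\<And>i. i < j + l \<Longrightarrow> feeds (f i) (f (Suc i))"
  shows "path_prod r u f (j + l) = path_prod r u (\<lambda>i. f (l + i)) j * path_prod r u f l"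
  using assms
proof (induction j)
  case 0
  then have "path_prod r u f l \<in> carrier_mat (r (f l)) (r (f 0))"
    by (intro path_prod_carrier) auto
  then show ?case by simp
next
  case (Suc j)
  have U: "u (f (j + l)) (f (Suc (j + l))) \<in> carrier_mat (r (f (Suc (j + l)))) (r (f (j + l)))"
    using Suc.prems by (intro weight_carrier) auto
  have S: "path_prod r u (\<lambda>i. f (l + i)) j \<in> carrier_mat (r (f (j + l))) (r (f l))"
    using path_prod_carrier[of j "\<lambda>i. f (l + i)"] Suc.prems by (simp add: add.commute)
  have L: "path_prod r u f l \<in> carrier_mat (r (f l)) (r (f 0))"
    using Suc.prems by (intro path_prod_carrier) auto
  have "path_prod r u f (Suc j + l) =
      u (f (j + l)) (f (Suc (j + l))) * (path_prod r u (\<lambda>i. f (l + i)) j * path_prod r u f l)"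
    using Suc by simp
  also have "\<dots> = path_prod r u (\<lambda>i. f (l + i)) (Suc j) * path_prod r u f l"
    using U S L by (simp add: assoc_mult_mat add.commute)
  finally show ?case .
qed

end

locale hypergraph_weights = matrix_weights "dedges F" r u for F :: "'v set set" and r u

text \<open>Each eigenvalue \<open>l\<close> of \<open>\<pi>(P)\<close> contributes the factor \<open>1 - l X\<^sup>|\<^sup>P\<^sup>|\<close>
  of \<open>det (I - X\<^sup>|\<^sup>P\<^sup>| \<pi>(P))\<close>.\<close>
definition cycle_spectrum :: "('v dedge \<Rightarrow> nat) \<Rightarrow> ('v dedge \<Rightarrow> 'v dedge \<Rightarrow> complex mat)
    \<Rightarrow> 'v dedge list set \<Rightarrow> (complex \<times> nat) list" where
  "cycle_spectrum r u P = map (\<lambda>l. (l, cyc_len P)) (eigenvalue_list (pi_mat r u (SOME c. c \<in> P)))"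

context hypergraph_weights
begin

lemma pi_mat_carrier:
  assumes "closed_geodesic F c"
  shows "pi_mat r u c \<in> carrier_mat (r (hd c)) (r (hd c))"
proof -
  have cne: "c \<noteq> []" using assms by (simp add: closed_geodesic_def)
  have "path_prod r u (\<lambda>i. c ! (i mod length c)) (length c)
      \<in> carrier_mat (r (c ! (length c mod length c))) (r (c ! (0 mod length c)))"
    by (rule path_prod_carrier) (rule closed_geodesic_nth_mod[OF assms])+
  then show ?thesis using cne by (simp add: pi_mat_eq_path_prod hd_conv_nth)
qed

text \<open>Rotating a cycle by one step conjugates its holonomy: \<open>\<pi>(d) = X Y\<close> and
  \<open>\<pi>(rotate 1 d) = Y X\<close> with \<open>Y\<close> the weight of the first transition.\<close>
lemma mat_trace_pow_pi_mat_rotate1: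
  assumes "closed_geodesic F d"
  shows "mat_trace (pi_mat r u (rotate 1 d) ^\<^sub>m Suc q) = mat_trace (pi_mat r u d ^\<^sub>m Suc q)"
proof -
  define f where "f = (\<lambda>i. d ! (i mod length d))"
  define g where "g = (\<lambda>i. f (Suc i))"
  have dne: "d \<noteq> []" using assms by (simp add: closed_geodesic_def)
  then obtain k where k: "length d = Suc k" by (cases d) auto
  have fD: "f i \<in> dedges F" and ff: "feeds (f i) (f (Suc i))" for i
    using closed_geodesic_nth_mod[OF assms] unfolding f_def by auto
  have f_period: "f (Suc k + i) = f i" for i
    unfolding f_def k[symmetric] by simp
  define X where "X = path_prod r u g k"
  define Y where "Y = u (f 0) (f (Suc 0))"
  have X: "X \<in> carrier_mat (r (f 0)) (r (f (Suc 0)))"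
    using path_prod_carrier[of k g] fD ff f_period[of 0] by (simp add: X_def g_def)
  have Y: "Y \<in> carrier_mat (r (f (Suc 0))) (r (f 0))"
    using weight_carrier fD ff unfolding Y_def by simp
  then have Y1: "path_prod r u f 1 = Y" by (simp add: Y_def)
  have "pi_mat r u d = path_prod r u f (k + 1)"
    using pi_mat_eq_path_prod[OF dne] k by (simp add: f_def)
  also have "\<dots> = X * Y"
    using path_prod_add[of k 1 f] fD ff Y1 by (simp add: X_def g_def)
  finally have XY: "pi_mat r u d = X * Y" .
  have "(\<lambda>i. rotate 1 d ! (i mod length (rotate 1 d))) = g"
  proof
    fix i
    have "rotate 1 d ! (i mod length d) = d ! ((1 + i mod length d) mod length d)"
      using nth_rotate[of "i mod length d" d 1] dne by simp
    then show "rotate 1 d ! (i mod length (rotate 1 d)) = g i"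
      by (simp add: g_def f_def mod_Suc_eq)
  qed
  then have "pi_mat r u (rotate 1 d) = path_prod r u g (1 + k)"
    using pi_mat_eq_path_prod[of "rotate 1 d"] dne k by simp
  also have "\<dots> = Y * X"
    using path_prod_add[of 1 k g] fD ff f_period[of 0] f_period[of 1]
    by (simp add: X_def Y_def g_def)
  finally have YX: "pi_mat r u (rotate 1 d) = Y * X" .
  show ?thesis
    unfolding XY YX using mat_trace_pow_mult_comm[OF X Y] by simp
qed

lemma mat_trace_pow_pi_mat_rotate:
  assumes "closed_geodesic F d"
  shows "mat_trace (pi_mat r u (rotate k d) ^\<^sub>m Suc q) = mat_trace (pi_mat r u d ^\<^sub>m Suc q)"
proof (induction k)
  case (Suc k)
  have "rotate (Suc k) d = rotate 1 (rotate k d)" by (simp add: rotate_rotate)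
  then show ?case
    using mat_trace_pow_pi_mat_rotate1[OF closed_geodesic_rotate[OF assms, of k]] Suc by simp
qed simp

lemma pi_mat_concat_replicate:
  assumes "closed_geodesic F d" "q \<ge> 1"
  shows "pi_mat r u (concat (replicate q d)) = pi_mat r u d ^\<^sub>m q"
proof -
  define k where "k = length d"
  define f where "f = (\<lambda>i. d ! (i mod k))"
  let ?c = "concat (replicate q d)"
  have dne: "d \<noteq> []" using assms by (simp add: closed_geodesic_def)
  have lc: "length ?c = q * k" unfolding k_def by (rule length_concat_replicate)
  have cne: "?c \<noteq> []" using lc dne assms(2) by (auto simp: k_def)
  have fD: "f i \<in> dedges F" and ff: "feeds (f i) (f (Suc i))" for i
    using closed_geodesic_nth_mod[OF assms(1)] unfolding f_def k_def by auto
  have P: "pi_mat r u d = path_prod r u f k"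
    using pi_mat_eq_path_prod[OF dne] by (simp add: f_def k_def)
  have pow: "path_prod r u f (p * k) = pi_mat r u d ^\<^sub>m p" for p
  proof (induction p)
    case 0
    then show ?case using pi_mat_carrier[OF assms(1)] dne by (simp add: f_def hd_conv_nth)
  next
    case (Suc p)
    have "(\<lambda>i. f (k + i)) = f" by (simp add: f_def k_def)
    then have "path_prod r u f (p * k + k) = path_prod r u f (p * k) * path_prod r u f k"
      using path_prod_add[of "p * k" k f] fD ff by simp
    then show ?case using Suc P by (simp add: add.commute)
  qed
  have "?c ! (i mod length ?c) = f i" for i
  proof -
    have "i mod length ?c < length ?c" using cne by simp
    then have "?c ! (i mod length ?c) = d ! (i mod length ?c mod k)"
      using nth_concat_replicate lc unfolding k_def by metis
    then show ?thesis using lc by (simp add: f_def mod_mod_cancel)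
  qed
  then have "(\<lambda>i. ?c ! (i mod length ?c)) = f" ..
  then have "pi_mat r u ?c = path_prod r u f (q * k)"
    using pi_mat_eq_path_prod[OF cne] lc by simp
  then show ?thesis using pow by simp
qed

lemma pi_mat_some_prime_cycle_carrier:
  assumes "P \<in> prime_cycles F"
  shows "pi_mat r u (SOME c. c \<in> P) \<in> carrier_mat (r (hd (SOME c. c \<in> P))) (r (hd (SOME c. c \<in> P)))"
  using mem_prime_cycleD(1)[OF assms some_mem_prime_cycle[OF assms]]
  by (intro pi_mat_carrier) (simp add: prime_geodesic_def)

lemma cycle_factor_eq_factor_prod:
  assumes "P \<in> prime_cycles F"
  shows "cycle_factor r u P = factor_prod (cycle_spectrum r u P)"
  using mem_prime_cycleD(3)[OF assms some_mem_prime_cycle[OF assms]]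
  unfolding cycle_factor_def Let_def cycle_spectrum_def factor_prod_const_length
    det_one_minus_eq_prod_eigenvalue_list[OF pi_mat_some_prime_cycle_carrier[OF assms]]
  by simp

lemma power_sum_cycle_spectrum:
  assumes "P \<in> prime_cycles F"
  shows "power_sum (cycle_spectrum r u P) m = (if cyc_len P dvd m
    then of_nat (cyc_len P) * mat_trace (pi_mat r u (SOME c. c \<in> P) ^\<^sub>m (m div cyc_len P)) else 0)"
  unfolding cycle_spectrum_def power_sum_const_length
    mat_trace_pow_eq_sum_eigenvalue_list[OF pi_mat_some_prime_cycle_carrier[OF assms]]
  by simp

lemma cycle_spectrum_pos:
  "P \<in> prime_cycles F \<Longrightarrow> \<forall>(c, k) \<in> set (cycle_spectrum r u P). k > 0"
  using cyc_len_prime_cycle_gt_0 unfolding cycle_spectrum_def by auto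

lemma sum_closed_geodesics_eq_sum_prime_cycles:
  assumes m: "m \<ge> 1"
  shows "(\<Sum>c | closed_geodesic F c \<and> length c = m. mat_trace (pi_mat r u c)) =
    (\<Sum>P | P \<in> prime_cycles F \<and> cyc_len P dvd m.
      of_nat (cyc_len P) * mat_trace (pi_mat r u (SOME c. c \<in> P) ^\<^sub>m (m div cyc_len P)))"
proof -
  let ?PG = "{d. prime_geodesic F d \<and> length d dvd m}"
  let ?t = "\<lambda>d. mat_trace (pi_mat r u d ^\<^sub>m (m div length d))"
  have "(\<Sum>c | closed_geodesic F c \<and> length c = m. mat_trace (pi_mat r u c))
      = (\<Sum>d\<in>?PG. mat_trace (pi_mat r u (concat (replicate (m div length d) d))))"
    using sum.reindex_bij_betw[OF prime_geodesic_power_bij[OF m, of F], of "\<lambda>c. mat_trace (pi_mat r u c)"]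
    by simp
  also have "\<dots> = (\<Sum>d\<in>?PG. ?t d)"
  proof (intro sum.cong refl)
    fix d assume d: "d \<in> ?PG"
    then have "d \<noteq> []" by (simp add: prime_geodesic_def closed_geodesic_def)
    then have "m div length d \<ge> 1"
      using d m by (auto simp: dvd_imp_le div_greater_zero_iff Suc_le_eq)
    then show "mat_trace (pi_mat r u (concat (replicate (m div length d) d))) = ?t d"
      using pi_mat_concat_replicate[of d] d by (simp add: prime_geodesic_def)
  qed
  also have "\<dots> = (\<Sum>P | P \<in> prime_cycles F \<and> cyc_len P dvd m. \<Sum>d\<in>P. ?t d)"
    by (rule sum_prime_geodesics_by_prime_cycles[OF finite_D m])
  also have "\<dots> = (\<Sum>P | P \<in> prime_cycles F \<and> cyc_len P dvd m.
      of_nat (cyc_len P) * mat_trace (pi_mat r u (SOME c. c \<in> P) ^\<^sub>m (m div cyc_len P)))"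
  proof (intro sum.cong refl)
    fix P assume P: "P \<in> {P. P \<in> prime_cycles F \<and> cyc_len P dvd m}"
    let ?x = "SOME c. c \<in> P"
    have PF: "P \<in> prime_cycles F" using P by simp
    have x: "prime_geodesic F ?x" "length ?x = cyc_len P"
      using mem_prime_cycleD[OF PF some_mem_prime_cycle[OF PF]] by simp_all
    have "0 < cyc_len P" by (rule cyc_len_prime_cycle_gt_0[OF PF])
    moreover have "cyc_len P \<le> m" using P m by (auto intro: dvd_imp_le)
    ultimately obtain q where q: "m div cyc_len P = Suc q"
      using div_greater_zero_iff[of m "cyc_len P"] by (cases "m div cyc_len P") auto
    have "?t (rotate k ?x) = ?t ?x" for k
      using mat_trace_pow_pi_mat_rotate[of ?x k q] x q by (simp add: prime_geodesic_def)
    then show "(\<Sum>d\<in>P. ?t d) = of_nat (cyc_len P) * mat_trace (pi_mat r u ?x ^\<^sub>m (m div cyc_len P))"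
      using sum_prime_cycle_rotation_invariant[OF PF, of ?t] x(2) by simp
  qed
  finally show ?thesis .
qed

end

section \<open>The edge operator\<close>

lemma set_block_index: "set (block_index r es) = {(e, j). e \<in> set es \<and> j < r e}"
  unfolding block_index_def by auto

lemma distinct_block_index: "distinct es \<Longrightarrow> distinct (block_index r es)"
  unfolding block_index_def by (induction es) (auto simp: distinct_map inj_on_def)

lemma sum_block_index:
  assumes "distinct es"
  shows "(\<Sum>z<length (block_index r es). g (block_index r es ! z)) = (\<Sum>e\<in>set es. \<Sum>j<r e. g (e, j))"
proof -
  have "(\<Sum>z<length (block_index r es). g (block_index r es ! z)) = sum g (set (block_index r es))"
    using distinct_block_index[OF assms]
    by (simp add: sum_list_sum_nth atLeast0LessThan sum_list_distinct_conv_sum_set[symmetric])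
  also have "set (block_index r es) = (SIGMA e:set es. {..<r e})"
    unfolding set_block_index by auto
  finally show ?thesis by (simp add: sum.Sigma)
qed

lemma M_mat_carrier: "M_mat r u es \<in> carrier_mat (length (block_index r es)) (length (block_index r es))"
  unfolding M_mat_def Let_def by simp

lemma M_mat_entry:
  assumes "a < length (block_index r es)" "b < length (block_index r es)"
  shows "M_mat r u es $$ (a, b) =
    (if feeds (fst (block_index r es ! b)) (fst (block_index r es ! a))
     then u (fst (block_index r es ! b)) (fst (block_index r es ! a)) $$
       (snd (block_index r es ! a), snd (block_index r es ! b))
     else 0)"
  using assms unfolding M_mat_def Let_def by simp

locale hypergraph_operator = hypergraph_weights F r u for F :: "'v set set" and r u +
  fixes es :: "'v dedge list"
  assumes distinct_es: "distinct es" and set_es: "set es = dedges F"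
begin

abbreviation "ix \<equiv> block_index r es"
abbreviation "M \<equiv> M_mat r u es"

lemma block_index_nth:
  "x < length ix \<Longrightarrow> fst (ix ! x) \<in> dedges F \<and> snd (ix ! x) < r (fst (ix ! x))"
  using nth_mem[of x ix] set_block_index[of r es] set_es by auto

lemma M_mat_mult_entry:
  assumes x: "x < length ix" and B: "B \<in> carrier_mat (length ix) nc" "y < nc"
    and g: "\<And>z. z < length ix \<Longrightarrow> B $$ (z, y) = g (fst (ix ! z)) (snd (ix ! z))"
  shows "(M * B) $$ (x, y) = (\<Sum>f\<in>{f \<in> dedges F. feeds f (fst (ix ! x))}.
    \<Sum>k<r f. u f (fst (ix ! x)) $$ (snd (ix ! x), k) * g f k)"
proof -
  define e j where "e = fst (ix ! x)" and "j = snd (ix ! x)"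
  define G where "G = (\<lambda>(f, k). (if feeds f e then u f e $$ (j, k) else 0) * g f k)"
  have "(M * B) $$ (x, y) = (\<Sum>z<length ix. M $$ (x, z) * B $$ (z, y))"
    using M_mat_carrier[of r u es] x B by (simp add: scalar_prod_def atLeast0LessThan)
  also have "\<dots> = (\<Sum>z<length ix. G (ix ! z))"
    using x g by (intro sum.cong refl) (simp add: M_mat_entry e_def j_def G_def case_prod_beta)
  also have "\<dots> = (\<Sum>f\<in>dedges F. \<Sum>k<r f. G (f, k))"
    using sum_block_index[OF distinct_es, where g = G] set_es by simp
  also have "\<dots> = (\<Sum>f\<in>dedges F. if feeds f e then \<Sum>k<r f. u f e $$ (j, k) * g f k else 0)"
    by (intro sum.cong refl) (auto simp: G_def)
  also have "\<dots> = (\<Sum>f\<in>{f \<in> dedges F. feeds f e}. \<Sum>k<r f. u f e $$ (j, k) * g f k)"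
    by (simp add: sum.inter_filter[OF finite_D, symmetric])
  finally show ?thesis by (simp add: e_def j_def)
qed

lemma M_mat_pow_entry:
  assumes "x < length ix" "y < length ix"
  shows "(M ^\<^sub>m n) $$ (x, y) = (\<Sum>v\<in>walks (dedges F) n (fst (ix ! y)) (fst (ix ! x)).
    path_prod r u ((!) v) n $$ (snd (ix ! x), snd (ix ! y)))"
  using assms(1)
proof (induction n arbitrary: x)
  case 0
  obtain e j e' j' where x: "ix ! x = (e, j)" and y: "ix ! y = (e', j')" by fastforce
  have "x = y \<longleftrightarrow> e = e' \<and> j = j'"
    using nth_eq_iff_index_eq[OF distinct_block_index[OF distinct_es, of r] 0 assms(2)] x y by auto
  then show ?case
    using 0 assms(2) block_index_nth[of x] block_index_nth[of y] M_mat_carrier[of r u es] x y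
    by (auto simp: walks_0)
next
  case (Suc n)
  have "(M ^\<^sub>m Suc n) $$ (x, y) = (M * M ^\<^sub>m n) $$ (x, y)"
    using pow_mat_Suc_left[OF M_mat_carrier[of r u es], of n] by (simp del: pow_mat.simps)
  also have "\<dots> = (\<Sum>f\<in>{f \<in> dedges F. feeds f (fst (ix ! x))}. \<Sum>k<r f.
      u f (fst (ix ! x)) $$ (snd (ix ! x), k) * (\<Sum>v\<in>walks (dedges F) n (fst (ix ! y)) f.
        path_prod r u ((!) v) n $$ (k, snd (ix ! y))))"
    using M_mat_carrier[of r u es] Suc assms(2)
    by (intro M_mat_mult_entry[where g = "\<lambda>f k. \<Sum>v\<in>walks (dedges F) n (fst (ix ! y)) f.
      path_prod r u ((!) v) n $$ (k, snd (ix ! y))"]) auto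
  also have "\<dots> = (\<Sum>v\<in>walks (dedges F) (Suc n) (fst (ix ! y)) (fst (ix ! x)).
      path_prod r u ((!) v) (Suc n) $$ (snd (ix ! x), snd (ix ! y)))"
    using block_index_nth[OF Suc.prems] block_index_nth[OF assms(2)]
    by (intro sum_walks_Suc[symmetric]) auto
  finally show ?case .
qed

lemma mat_trace_M_mat_pow_walks:
  "mat_trace (M ^\<^sub>m n) =
    (\<Sum>e\<in>dedges F. \<Sum>v\<in>walks (dedges F) n e e. mat_trace (path_prod r u ((!) v) n))"
proof -
  let ?w = "\<lambda>e j. \<Sum>v\<in>walks (dedges F) n e e. path_prod r u ((!) v) n $$ (j, j)"
  have "mat_trace (M ^\<^sub>m n) = (\<Sum>x<length ix. (\<lambda>(e, j). ?w e j) (ix ! x))"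
    using M_mat_carrier[of r u es]
    by (auto simp: mat_trace_def M_mat_pow_entry case_prod_beta intro!: sum.cong)
  also have "\<dots> = (\<Sum>e\<in>dedges F. \<Sum>j<r e. ?w e j)"
    using sum_block_index[OF distinct_es, where g = "\<lambda>(e, j). ?w e j"] set_es by simp
  also have "\<dots> = (\<Sum>e\<in>dedges F. \<Sum>v\<in>walks (dedges F) n e e. \<Sum>j<r e. path_prod r u ((!) v) n $$ (j, j))"
    by (simp add: sum.swap[of _ "{..<_}"])
  also have "\<dots> = (\<Sum>e\<in>dedges F. \<Sum>v\<in>walks (dedges F) n e e. mat_trace (path_prod r u ((!) v) n))"
  proof (intro sum.cong refl)
    fix e v assume "v \<in> walks (dedges F) n e e"
    then have "dim_row (path_prod r u ((!) v) n) = r e"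
      using path_prod_walk_carrier by blast
    then show "(\<Sum>j<r e. path_prod r u ((!) v) n $$ (j, j)) = mat_trace (path_prod r u ((!) v) n)"
      by (simp add: mat_trace_def)
  qed
  finally show ?thesis .
qed

lemma mat_trace_M_mat_pow:
  assumes "n \<ge> 1"
  shows "mat_trace (M ^\<^sub>m n) = (\<Sum>c | closed_geodesic F c \<and> length c = n. mat_trace (pi_mat r u c))"
proof -
  let ?t = "\<lambda>v. mat_trace (path_prod r u ((!) v) n)"
  have "mat_trace (M ^\<^sub>m n) = (\<Sum>(e, v)\<in>(SIGMA e:dedges F. walks (dedges F) n e e). ?t v)"
    unfolding mat_trace_M_mat_pow_walks
    by (rule sum.Sigma) (use finite_D finite_walks[OF finite_D] in auto)
  also have "\<dots> = (\<Sum>c | closed_geodesic F c \<and> length c = n. ?t (c @ [hd c]))"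
    using sum.reindex_bij_betw[OF closed_geodesic_walks_bij[OF assms], of "\<lambda>(e, v). ?t v"]
    by simp
  also have "\<dots> = (\<Sum>c | closed_geodesic F c \<and> length c = n. mat_trace (pi_mat r u c))"
  proof (intro sum.cong refl)
    fix c assume "c \<in> {c. closed_geodesic F c \<and> length c = n}"
    then have "c \<noteq> []" "length c = n" by (auto simp: closed_geodesic_def)
    then show "?t (c @ [hd c]) = mat_trace (pi_mat r u c)"
      using pi_mat_eq_path_prod path_prod_cong[of n "(!) (c @ [hd c])"] nth_append_hd_mod
      by metis
  qed
  finally show ?thesis .
qed


lemma mat_trace_M_mat_pow_prime_cycles:
  assumes "m \<ge> 1"
  shows "mat_trace (M ^\<^sub>m m) = (\<Sum>P | P \<in> prime_cycles F \<and> cyc_len P dvd m.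
      of_nat (cyc_len P) * mat_trace (pi_mat r u (SOME c. c \<in> P) ^\<^sub>m (m div cyc_len P)))"
  using mat_trace_M_mat_pow[OF assms] sum_closed_geodesics_eq_sum_prime_cycles[OF assms] by simp

lemma power_sum_prime_cycles:
  assumes Ps: "set Ps = {P \<in> prime_cycles F. cyc_len P \<le> n}" "distinct Ps"
    and m: "1 \<le> m" "m \<le> n"
  shows "power_sum (concat (map (cycle_spectrum r u) Ps)) m = mat_trace (M ^\<^sub>m m)"
proof -
  let ?S = "{P \<in> prime_cycles F. cyc_len P \<le> n}"
  let ?t = "\<lambda>P. of_nat (cyc_len P) * mat_trace (pi_mat r u (SOME c. c \<in> P) ^\<^sub>m (m div cyc_len P))"
  have "power_sum (concat (map (cycle_spectrum r u) Ps)) m = (\<Sum>P\<leftarrow>Ps. power_sum (cycle_spectrum r u P) m)"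
    by (simp add: power_sum_concat o_def)
  also have "\<dots> = (\<Sum>P\<in>?S. power_sum (cycle_spectrum r u P) m)"
    unfolding Ps(1)[symmetric] by (rule sum_list_distinct_conv_sum_set[OF Ps(2)])
  also have "\<dots> = (\<Sum>P\<in>?S. if cyc_len P dvd m then ?t P else 0)"
  proof (intro sum.cong refl)
    fix P assume "P \<in> ?S"
    then show "power_sum (cycle_spectrum r u P) m = (if cyc_len P dvd m then ?t P else 0)"
      using power_sum_cycle_spectrum[of P m] by simp
  qed
  also have "\<dots> = (\<Sum>P | P \<in> ?S \<and> cyc_len P dvd m. ?t P)"
    by (rule sum.inter_filter[OF finite_prime_cycles_le[OF finite_D], symmetric])
  also have "{P. P \<in> ?S \<and> cyc_len P dvd m} = {P. P \<in> prime_cycles F \<and> cyc_len P dvd m}"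
  proof -
    have "cyc_len P \<le> n" if "cyc_len P dvd m" for P
      using dvd_imp_le[OF that] m by simp
    then show ?thesis by blast
  qed
  finally show ?thesis
    using mat_trace_M_mat_pow_prime_cycles[OF m(1)] by simp
qed

lemma det_one_minus_X_M_mat:
  "det (1\<^sub>m (dim_row M) - map_mat (\<lambda>x. fps_X * fps_const x) M) =
     factor_prod (map (\<lambda>l. (l, 1)) (eigenvalue_list M))"
  unfolding factor_prod_const_length det_one_minus_eq_prod_eigenvalue_list[OF M_mat_carrier] by simp

lemma zeta_fps_nth:
  "fps_nth (zeta_fps F r u) n =
     fps_nth (inverse (det (1\<^sub>m (dim_row M) - map_mat (\<lambda>x. fps_X * fps_const x) M))) n"
proof -
  let ?S = "{P \<in> prime_cycles F. cyc_len P \<le> n}"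
  let ?L = "map (\<lambda>l. (l, 1::nat)) (eigenvalue_list M)"
  obtain Ps where Ps: "set Ps = ?S" "distinct Ps"
    using finite_distinct_list[OF finite_prime_cycles_le[OF finite_D]] by blast
  let ?L' = "concat (map (cycle_spectrum r u) Ps)"
  have "(\<Prod>P\<in>?S. cycle_factor r u P) = (\<Prod>P\<leftarrow>Ps. cycle_factor r u P)"
    unfolding Ps(1)[symmetric] by (rule prod.distinct_set_conv_list[OF Ps(2)])
  also have "\<dots> = (\<Prod>P\<leftarrow>Ps. factor_prod (cycle_spectrum r u P))"
    using cycle_factor_eq_factor_prod Ps(1) by (intro arg_cong[where f = prod_list] map_cong) auto
  finally have cycles: "(\<Prod>P\<in>?S. cycle_factor r u P) = factor_prod ?L'"
    by (simp add: factor_prod_concat o_def)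
  have pos: "\<forall>(c, k) \<in> set ?L. k > 0" "\<forall>(c, k) \<in> set ?L'. k > 0"
    using cycle_spectrum_pos Ps(1) by auto
  have "\<forall>i\<le>n. fps_nth (factor_prod ?L') i = fps_nth (factor_prod ?L) i"
  proof (intro allI impI factor_prod_nth_eqI[OF pos(2,1)])
    fix m assume "1 \<le> m" "m \<le> n"
    then show "power_sum ?L' m = power_sum ?L m"
      using power_sum_prime_cycles[OF Ps] mat_trace_pow_eq_sum_eigenvalue_list[OF M_mat_carrier]
      by (simp add: power_sum_const_length)
  qed
  then have "fps_nth (inverse (factor_prod ?L')) n = fps_nth (inverse (factor_prod ?L)) n"
    using factor_prod_nth_0[OF pos(1)] factor_prod_nth_0[OF pos(2)] by (intro fps_nth_inverse_eqI) auto
  moreover have "fps_nth (zeta_fps F r u) n = fps_nth (inverse (\<Prod>P\<in>?S. cycle_factor r u P)) n"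
    unfolding zeta_fps_def by (simp add: inverse_prod_fps)
  ultimately show ?thesis
    unfolding det_one_minus_X_M_mat cycles by simp
qed

theorem inverse_zeta_fps_eq_det:
  "inverse (zeta_fps F r u) = det (1\<^sub>m (dim_row M) - map_mat (\<lambda>x. fps_X * fps_const x) M)"
proof -
  let ?f = "det (1\<^sub>m (dim_row M) - map_mat (\<lambda>x. fps_X * fps_const x) M)"
  have "zeta_fps F r u = inverse ?f"
    by (rule fps_ext) (rule zeta_fps_nth)
  moreover have "fps_nth ?f 0 = 1"
    unfolding det_one_minus_X_M_mat by (rule factor_prod_nth_0) auto
  ultimately show ?thesis by simp
qed

end

theorem theorem2:
  fixes V :: "'v set" and F :: "'v set set" and r :: "'v dedge \<Rightarrow> nat"
    and u :: "'v dedge \<Rightarrow> 'v dedge \<Rightarrow> complex mat" and es :: "'v dedge list"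
  assumes "finite V" and "F \<subseteq> Pow V" and "{} \<notin> F"
    and "\<forall>e \<in> dedges F. r e > 0"
    and "\<forall>e \<in> dedges F. \<forall>e' \<in> dedges F. feeds e' e \<longrightarrow> u e' e \<in> carrier_mat (r e) (r e')"
    and "distinct es" and "set es = dedges F"
  shows "inverse (zeta_fps F r u) =
    det (1\<^sub>m (dim_row (M_mat r u es)) - map_mat (\<lambda>x. fps_X * fps_const x) (M_mat r u es))"
proof -
  have "dedges F \<subseteq> Pow V \<times> V"
    using assms(2) unfolding dedges_def by auto
  moreover have "finite (Pow V \<times> V)"
    using assms(1) by simp
  ultimately have "finite (dedges F)"
    by (rule finite_subset)
  then interpret hypergraph_operator F r u es
    using assms(5-7) by unfold_locales auto
  show ?thesis by (rule inverse_zeta_fps_eq_det)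
qed

end
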